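(* Let $n\ge1$, $\lambda\in\mathbb C$ with $s=\operatorname{Re}\lambda>0$, and $\alpha>0$. Let ${\bf w}^\alpha_\lambda(y)=(2\pi)^{-n/2}\Gamma(\alpha)^{-1}(1-|y|^2)^{\alpha-1}$ for $|y|<1$. Then $$\int_{|y|<1}{\bf w}^\alpha_\lambda(y)\,\|\delta_{\lambda,y}\|_{L^1(\mathbb R^n)}^2\,dy<\infty$$ if and only if $\alpha>\max\{2s-1,0\}$.
   Context: $|\cdot|$ is the Euclidean norm on $\mathbb R^n$, $dy$ Lebesgue measure; for $z\in\mathbb C^n$, $z^2=\sum_jz_j^2$; powers use the principal branch. ${\bf c}(\lambda)=\pi^{n/2}\Gamma(2\lambda)/\Gamma(\lambda+n/2)$ and $\delta_{\lambda,y}(x)={\bf c}(\lambda)^{-1}(1+(x+iy)^2)^{-(\lambda+n/2)}$ for $x\in\mathbb R^n$, $|y|<1$. *)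

theory Defs
  imports "HOL-Analysis.Analysis"
begin

text \<open>For x, y in R^n (n = DIM('a)): (x + i y)^2 = sum_j (x_j + i y_j)^2.\<close>
definition csq :: "'a::euclidean_space \<Rightarrow> 'a \<Rightarrow> complex" where
  "csq x y = (\<Sum>b\<in>Basis. (complex_of_real (x \<bullet> b) + \<i> * complex_of_real (y \<bullet> b))^2)"

definition cconst :: "nat \<Rightarrow> complex \<Rightarrow> complex" where
  "cconst n lam = complex_of_real (pi powr (real n / 2)) * Gamma (2 * lam)
                  / Gamma (lam + complex_of_real (real n / 2))"

definition delta :: "complex \<Rightarrow> 'a::euclidean_space \<Rightarrow> 'a \<Rightarrow> complex" where
  "delta lam y x = inverse (cconst DIM('a) lam)
      * (1 + csq x y) powr (- (lam + complex_of_real (real DIM('a) / 2)))"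

definition L1norm :: "('a::euclidean_space \<Rightarrow> complex) \<Rightarrow> ennreal" where
  "L1norm f = (\<integral>\<^sup>+ x. ennreal (norm (f x)) \<partial>lborel)"

definition wgt :: "real \<Rightarrow> 'a::euclidean_space \<Rightarrow> real" where
  "wgt \<alpha> y = (2 * pi) powr (- real DIM('a) / 2) / Gamma \<alpha> * (1 - norm y ^ 2) powr (\<alpha> - 1)"

end

theory Submission
  imports Defs
begin

text \<open>
  For |y| < 1 and e = 1 - |y|^2, the modulus |1 + (x + iy)^2| is comparable to
  h(x) = e + |x|^2 + 2|x . y|, so the L^1 norm of delta_{lambda,y} is comparable to the integral of
  h^(-m) with m = Re lambda + n/2. Near the sphere some coordinate y_b has |y_b| >= 1/(2 sqrt n);
  integrating first along e_b and then over the transverse coordinates bounds the integral of h^(-p)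
  by a multiple of e^((n+1)/2 - p) when p > (n+1)/2, and a sheared box of volume ~ e^((n+1)/2) on
  which h <= C e gives the matching lower bound. Hence the L^1 norm is at least c e^(1/2 - Re lambda)
  near the sphere, and at most M e^(-beta) for every beta > 0 with beta >= Re lambda - 1/2. The
  weighted integral is thus squeezed between integrals of powers e^gamma over the ball, and summing
  over the dyadic shells 1 - 2^-k <= |y| < 1 - 2^-(k+1) shows that these are finite exactly when
  gamma > -1.
\<close>

lemma DIM_ge_1: "1 \<le> real DIM('a::euclidean_space)"
  using DIM_positive[where 'a='a] by linarith

lemma norm_pow_2_eq_sum_Basis: "norm z ^ 2 = (\<Sum>b\<in>Basis. (z \<bullet> b)^2)"
  for z :: "'a::euclidean_space"
  by (metis (no_types, lifting) dot_square_norm euclidean_inner power2_eq_square sum.cong)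

lemma norm_pow_2_split_Basis:
  "b \<in> Basis \<Longrightarrow> norm z ^ 2 = (z \<bullet> b)^2 + (\<Sum>j\<in>Basis - {b}. (z \<bullet> j)^2)"
  for z b :: "'a::euclidean_space"
  by (simp add: norm_pow_2_eq_sum_Basis sum.remove)

lemma exists_Basis_inner_pow_2_ge:
  fixes y :: "'a::euclidean_space"
  shows "\<exists>b\<in>Basis. norm y ^ 2 \<le> real DIM('a) * (y \<bullet> b)^2"
proof -
  define M where "M = Max ((\<lambda>j. (y \<bullet> j)^2) ` (Basis :: 'a set))"
  have "M \<in> (\<lambda>j. (y \<bullet> j)^2) ` (Basis :: 'a set)"
    unfolding M_def by (rule Max_in) auto
  then obtain b where b: "b \<in> Basis" "M = (y \<bullet> b)^2"
    by auto
  have "norm y ^ 2 = (\<Sum>j\<in>Basis. (y \<bullet> j)^2)"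
    by (rule norm_pow_2_eq_sum_Basis)
  also have "\<dots> \<le> (\<Sum>j\<in>(Basis::'a set). M)"
    unfolding M_def by (intro sum_mono Max_ge) auto
  finally show ?thesis
    using b by auto
qed

lemma exists_Basis_inner_large:
  fixes y :: "'a::euclidean_space"
  assumes "1/2 \<le> norm y"
  shows "\<exists>b\<in>Basis. 1 \<le> 4 * real DIM('a) * (y \<bullet> b)^2 \<and> 1 / \<bar>y \<bullet> b\<bar> \<le> 2 * real DIM('a)"
proof -
  define n where "n = real DIM('a)"
  have n: "n \<ge> 1"
    unfolding n_def by (rule DIM_ge_1)
  obtain b where b: "b \<in> Basis" "norm y ^ 2 \<le> n * (y \<bullet> b)^2"
    using exists_Basis_inner_pow_2_ge[of y] unfolding n_def by auto
  have "1/4 \<le> norm y ^ 2"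
    using power_mono[OF assms, of 2] by (simp add: power_divide)
  with b have large: "1 \<le> 4 * n * (y \<bullet> b)^2"
    by linarith
  have "(1 / (2 * n))^2 \<le> 1 / (4 * n)"
    using n by (simp add: power2_eq_square field_simps)
  also have "\<dots> \<le> \<bar>y \<bullet> b\<bar>^2"
    using large n by (simp add: field_simps)
  finally have "1 / (2 * n) \<le> \<bar>y \<bullet> b\<bar>"
    by (rule power2_le_imp_le) simp
  moreover have "y \<bullet> b \<noteq> 0"
    using large by auto
  ultimately have "1 / \<bar>y \<bullet> b\<bar> \<le> 2 * n"
    using n by (simp add: field_simps)
  with b large show ?thesis
    unfolding n_def by auto
qed

lemma prod_if_eq_remove:
  assumes "finite A" "b \<in> A"
  shows "(\<Prod>j\<in>A. if j = b then u else g j) = u * (\<Prod>j\<in>A - {b}. g j)"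
proof -
  have "(\<Prod>j\<in>A - {b}. if j = b then u else g j) = (\<Prod>j\<in>A - {b}. g j)"
    by (rule prod.cong) auto
  then show ?thesis
    using assms by (simp add: prod.remove)
qed

lemma powr_one_plus_sum_le_prod:
  fixes a :: "'b \<Rightarrow> real" and p :: real
  assumes S: "finite S" "S \<noteq> {}" and a: "\<And>j. j \<in> S \<Longrightarrow> a j \<ge> 0" and p: "p \<ge> 0"
  shows "(1 + (\<Sum>j\<in>S. a j)) powr (-p) \<le> (\<Prod>j\<in>S. (1 + a j) powr (- (p / card S)))"
proof -
  define A where "A = 1 + (\<Sum>j\<in>S. a j)"
  have A: "A > 0"
    unfolding A_def using a by (simp add: add_pos_nonneg sum_nonneg)
  have "(\<Prod>j\<in>S. (1 + a j) powr (p / card S)) \<le> (\<Prod>j\<in>S. A powr (p / card S))"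
    unfolding A_def using a S(1) p
    by (intro prod_mono conjI powr_mono2) (auto intro: member_le_sum)
  also have "\<dots> = A powr p"
    using S A by (simp add: powr_realpow[symmetric] powr_powr)
  moreover have "0 < (\<Prod>j\<in>S. (1 + a j) powr (p / card S))"
    using a by (intro prod_pos) (smt (verit) powr_gt_zero)
  ultimately have "inverse (A powr p) \<le> inverse (\<Prod>j\<in>S. (1 + a j) powr (p / card S))"
    by (intro le_imp_inverse_le) auto
  then show ?thesis
    unfolding A_def by (simp add: powr_minus flip: prod_inversef)
qed

lemma powr_add_sum_le_prod:
  fixes t :: "'b \<Rightarrow> real"
  assumes "finite S" "e > 0" "r \<ge> 0"
  shows "(e + (\<Sum>j\<in>S. (t j)^2)) powr (-r) \<le> e powr (-r) * (\<Prod>j\<in>S. (1 + (t j)^2 / e) powr (- (r / card S)))"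
proof (cases "S = {}")
  case False
  have "e + (\<Sum>j\<in>S. (t j)^2) = e * (1 + (\<Sum>j\<in>S. (t j)^2 / e))"
    using assms by (simp add: sum_divide_distrib[symmetric] field_simps)
  then have "(e + (\<Sum>j\<in>S. (t j)^2)) powr (-r) = e powr (-r) * (1 + (\<Sum>j\<in>S. (t j)^2 / e)) powr (-r)"
    using assms by (simp add: powr_mult add_pos_nonneg sum_nonneg)
  also have "\<dots> \<le> e powr (-r) * (\<Prod>j\<in>S. (1 + (t j)^2 / e) powr (- (r / card S)))"
    using assms False by (intro mult_left_mono powr_one_plus_sum_le_prod) auto
  finally show ?thesis .
qed simp

lemma one_le_powr_neg:
  fixes e r :: real
  assumes "0 < e" "e \<le> 1" "r \<ge> 0"
  shows "1 \<le> e powr (-r)"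
proof -
  have "e powr r \<le> 1"
    using powr_mono2[of r e 1] assms by simp
  then show ?thesis
    using assms by (simp add: powr_minus one_le_inverse)
qed

lemma powr_neg_le_split:
  fixes h t m m' :: real
  assumes h: "h > 0" "t \<le> h" "0 \<le> t" and m: "0 \<le> m" "m \<le> m'"
  shows "h powr (-m) \<le> h powr (-m') + 2 powr m * (1 + t) powr (-m)"
proof (cases "h \<le> 1")
  case True
  then have "h powr (-m) \<le> h powr (-m')"
    using m h by (intro powr_mono') auto
  then show ?thesis
    by (smt (verit) powr_ge_zero mult_nonneg_nonneg)
next
  case False
  then have "h powr (-m) \<le> ((1 + t) / 2) powr (-m)"
    using m h by (intro powr_mono2') auto
  also have "\<dots> = 2 powr m * (1 + t) powr (-m)"
    using h by (simp add: powr_divide powr_minus divide_simps)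
  finally show ?thesis
    by (smt (verit) powr_ge_zero)
qed

lemma power_diff_le_mult_diff:
  fixes a b :: real
  assumes "0 \<le> b" "b \<le> a" "a \<le> 1"
  shows "a ^ n - b ^ n \<le> real n * (a - b)"
proof (induction n)
  case (Suc n)
  have "b ^ n \<le> a ^ n"
    using assms by (intro power_mono) auto
  have "a ^ Suc n - b ^ Suc n = a * (a ^ n - b ^ n) + (a - b) * b ^ n"
    by (simp add: algebra_simps)
  also have "\<dots> \<le> 1 * (real n * (a - b)) + (a - b) * 1"
    using Suc assms \<open>b ^ n \<le> a ^ n\<close> by (intro add_mono mult_mono) (auto simp: power_le_one)
  finally show ?case
    by (simp add: algebra_simps)
qed simp

lemma power_diff_ge_mult_diff:
  fixes a b :: real
  assumes "0 \<le> b" "b \<le> a" "n \<ge> 1"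
  shows "(a - b) * b ^ (n - 1) \<le> a ^ n - b ^ n"
proof -
  obtain k where n: "n = Suc k"
    using assms(3) by (cases n) auto
  have "b ^ k \<le> a ^ k"
    using assms by (intro power_mono) auto
  then have "0 \<le> a * (a ^ k - b ^ k)"
    using assms by simp
  moreover have "a ^ Suc k - b ^ Suc k = a * (a ^ k - b ^ k) + (a - b) * b ^ k"
    by (simp add: algebra_simps)
  ultimately show ?thesis
    unfolding n by simp
qed

section \<open>The size of the kernel\<close>

lemma csq_eq_norm_inner:
  fixes x y :: "'a::euclidean_space"
  shows "csq x y = complex_of_real (norm x ^ 2 - norm y ^ 2) + \<i> * complex_of_real (2 * (x \<bullet> y))"
proof -
  have "csq x y = (\<Sum>b\<in>Basis. complex_of_real ((x\<bullet>b)^2 - (y\<bullet>b)^2)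
                     + \<i> * complex_of_real (2 * ((x\<bullet>b) * (y\<bullet>b))))"
    unfolding csq_def by (intro sum.cong refl) (simp add: power2_eq_square algebra_simps)
  also have "\<dots> = complex_of_real (\<Sum>b\<in>Basis. (x\<bullet>b)^2 - (y\<bullet>b)^2)
                  + \<i> * complex_of_real (2 * (\<Sum>b\<in>Basis. (x\<bullet>b) * (y\<bullet>b)))"
    by (simp add: sum.distrib sum_distrib_left)
  also have "(\<Sum>b\<in>Basis. (x\<bullet>b)^2 - (y\<bullet>b)^2) = norm x ^ 2 - norm y ^ 2"
    by (simp add: sum_subtractf norm_pow_2_eq_sum_Basis)
  also have "(\<Sum>b\<in>Basis. (x\<bullet>b) * (y\<bullet>b)) = x \<bullet> y"
    by (simp add: euclidean_inner[of x y])
  finally show ?thesis .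
qed

lemma cconst_nonzero:
  assumes "Re lam > 0"
  shows "cconst n lam \<noteq> 0"
proof -
  have Re_le_0: "Re z \<le> 0" if "z \<in> \<int>\<^sub>\<le>\<^sub>0" for z
    using that by (auto elim!: nonpos_Ints_cases)
  have "2 * lam \<notin> \<int>\<^sub>\<le>\<^sub>0" "lam + complex_of_real (real n / 2) \<notin> \<int>\<^sub>\<le>\<^sub>0"
    using assms Re_le_0 by force+
  then show ?thesis
    unfolding cconst_def by (simp add: Gamma_eq_zero_iff)
qed

definition delta_denom :: "real \<Rightarrow> 'a::real_inner \<Rightarrow> 'a \<Rightarrow> real" where
  "delta_denom e y x = e + norm x ^ 2 + 2 * \<bar>x \<bullet> y\<bar>"

lemma delta_denom_pos: "0 < e \<Longrightarrow> 0 < delta_denom e y x"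
  unfolding delta_denom_def by (simp add: add_pos_nonneg)

lemma borel_measurable_delta_denom [measurable]:
  "delta_denom e (y::'a::euclidean_space) \<in> borel_measurable borel"
  unfolding delta_denom_def by measurable

lemma one_minus_norm_pow_2_pos: "norm y < 1 \<Longrightarrow> 0 < 1 - norm y ^ 2"
  by (simp add: abs_square_less_1)

lemma cmod_one_plus_csq_bounds:
  fixes x y :: "'a::euclidean_space"
  assumes "norm y < 1"
  shows "cmod (1 + csq x y) \<le> delta_denom (1 - norm y ^ 2) y x"
    and "delta_denom (1 - norm y ^ 2) y x / 2 \<le> cmod (1 + csq x y)"
proof -
  have y: "0 < 1 - norm y ^ 2"
    using assms by (rule one_minus_norm_pow_2_pos)
  have Re: "Re (1 + csq x y) = (1 - norm y ^ 2) + norm x ^ 2"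
    and Im: "Im (1 + csq x y) = 2 * (x \<bullet> y)"
    by (simp_all add: csq_eq_norm_inner)
  show "cmod (1 + csq x y) \<le> delta_denom (1 - norm y ^ 2) y x"
    using cmod_le[of "1 + csq x y"] y unfolding Re Im delta_denom_def by (simp add: abs_mult)
  show "delta_denom (1 - norm y ^ 2) y x / 2 \<le> cmod (1 + csq x y)"
    using abs_Re_le_cmod[of "1 + csq x y"] abs_Im_le_cmod[of "1 + csq x y"] y
    unfolding Re Im delta_denom_def by (simp add: abs_mult)
qed

text \<open>The argument of \<open>1 + (x + iy)\<^sup>2\<close> only contributes the factor \<open>exp (Im \<lambda> \<cdot> Arg)\<close>, which lies
  between \<open>exp (\<plusminus>\<pi> \<bar>Im \<lambda>\<bar>)\<close>.\<close>
lemma norm_delta_bounds: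
  fixes y x :: "'a::euclidean_space"
  assumes y: "norm y < 1" and lam: "Re lam > 0"
  defines "h \<equiv> delta_denom (1 - norm y ^ 2) y x"
    and "m \<equiv> Re lam + real DIM('a) / 2"
    and "K \<equiv> norm (inverse (cconst DIM('a) lam))"
  shows "K * exp (- pi * \<bar>Im lam\<bar>) * h powr (-m) \<le> norm (delta lam y x)"
    and "norm (delta lam y x) \<le> K * exp (pi * \<bar>Im lam\<bar>) * 2 powr m * h powr (-m)"
proof -
  let ?z = "1 + csq x y"
  have h: "cmod ?z \<le> h" "h / 2 \<le> cmod ?z" "0 < h"
    using cmod_one_plus_csq_bounds[OF y, of x] delta_denom_pos[OF one_minus_norm_pow_2_pos[OF y]]
    unfolding h_def by auto
  have m: "m > 0"
    unfolding m_def using lam by auto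
  have norm_delta: "norm (delta lam y x) = K * (cmod ?z powr (-m) * exp (Im lam * Arg ?z))"
    unfolding delta_def K_def m_def by (simp add: norm_mult norm_powr_complex)
  have "\<bar>Im lam * Arg ?z\<bar> \<le> \<bar>Im lam\<bar> * pi"
    unfolding abs_mult using mpi_less_Arg[of ?z] Arg_le_pi[of ?z]
    by (intro mult_left_mono) auto
  then have Arg: "exp (- pi * \<bar>Im lam\<bar>) \<le> exp (Im lam * Arg ?z)"
    "exp (Im lam * Arg ?z) \<le> exp (pi * \<bar>Im lam\<bar>)"
    by (simp_all add: abs_le_iff mult.commute)
  have "h powr (-m) \<le> cmod ?z powr (-m)"
    by (rule powr_mono2') (use m h in auto)
  with Arg(1) have "exp (- pi * \<bar>Im lam\<bar>) * h powr (-m) \<le> cmod ?z powr (-m) * exp (Im lam * Arg ?z)"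
    by (simp add: mult.commute mult_mono)
  then show "K * exp (- pi * \<bar>Im lam\<bar>) * h powr (-m) \<le> norm (delta lam y x)"
    unfolding norm_delta K_def by (simp add: mult.assoc mult_left_mono)
  have "cmod ?z powr (-m) \<le> (h / 2) powr (-m)"
    by (rule powr_mono2') (use m h in auto)
  also have "(h / 2) powr (-m) = 2 powr m * h powr (-m)"
    by (simp add: powr_divide powr_minus divide_simps)
  finally have "cmod ?z powr (-m) * exp (Im lam * Arg ?z) \<le> exp (pi * \<bar>Im lam\<bar>) * (2 powr m * h powr (-m))"
    using Arg(2) by (subst mult.commute) (rule mult_mono, simp_all)
  then show "norm (delta lam y x) \<le> K * exp (pi * \<bar>Im lam\<bar>) * 2 powr m * h powr (-m)"
    unfolding norm_delta K_def by (simp add: mult.assoc mult_left_mono)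
qed

lemma L1norm_delta_le_nn_integral:
  fixes y :: "'a::euclidean_space"
  assumes y: "norm y < 1" and lam: "Re lam > 0"
  defines "m \<equiv> Re lam + real DIM('a) / 2"
  shows "L1norm (delta lam y) \<le> ennreal (norm (inverse (cconst DIM('a) lam)) * exp (pi * \<bar>Im lam\<bar>) * 2 powr m)
    * (\<integral>\<^sup>+x. ennreal (delta_denom (1 - norm y ^ 2) y x powr (-m)) \<partial>lborel)"
  unfolding L1norm_def m_def using norm_delta_bounds(2)[OF y lam]
  by (subst nn_integral_cmult[symmetric]) (auto intro!: nn_integral_mono simp: ennreal_mult[symmetric])

lemma nn_integral_le_L1norm_delta:
  fixes y :: "'a::euclidean_space"
  assumes y: "norm y < 1" and lam: "Re lam > 0"
  defines "m \<equiv> Re lam + real DIM('a) / 2"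
  shows "ennreal (norm (inverse (cconst DIM('a) lam)) * exp (- pi * \<bar>Im lam\<bar>))
    * (\<integral>\<^sup>+x. ennreal (delta_denom (1 - norm y ^ 2) y x powr (-m)) \<partial>lborel) \<le> L1norm (delta lam y)"
  unfolding L1norm_def m_def using norm_delta_bounds(1)[OF y lam]
  by (subst nn_integral_cmult[symmetric]) (auto intro!: nn_integral_mono simp: ennreal_mult[symmetric])

section \<open>Line integrals and Fubini along a coordinate\<close>

lemma nn_integral_powr_affine_atLeast_0:
  fixes c a p :: real
  assumes c: "c > 0" and a: "a > 0" and p: "p > 1"
  shows "(\<integral>\<^sup>+s. ennreal ((c + a * s) powr (-p)) * indicator {0..} s \<partial>lborel)
     = ennreal (c powr (1 - p) / (a * (p - 1)))"
proof -
  define F where "F x = (-1 / (a * (p - 1))) * (c + a * x) powr (1 - p)" for x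
  have "(\<integral>\<^sup>+s. ennreal ((c + a * s) powr (-p)) * indicator {0..} s \<partial>lborel) = 0 - F 0"
  proof (rule nn_integral_FTC_atLeast)
    fix x :: real
    assume "0 \<le> x"
    then have pos: "c + a * x > 0"
      using c a by (simp add: add_pos_nonneg)
    have "DERIV (\<lambda>x. (c + a * x) powr (1 - p)) x :> (1 - p) * (c + a * x) powr (1 - p - 1) * a"
      using DERIV_fun_powr[where r = "1 - p", of "\<lambda>x. c + a * x" a x] pos
      by (auto intro!: derivative_eq_intros)
    then have "DERIV F x :> (-1 / (a * (p - 1))) * ((1 - p) * (c + a * x) powr (1 - p - 1) * a)"
      unfolding F_def by (rule DERIV_cmult)
    also have "(-1 / (a * (p - 1))) * ((1 - p) * (c + a * x) powr (1 - p - 1) * a) = (c + a * x) powr (-p)"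
      using a p by (simp add: field_simps)
    finally show "DERIV F x :> (c + a * x) powr (-p)" .
  next
    have "filterlim (\<lambda>x. c + a * x) at_top at_top"
      by (rule filterlim_tendsto_add_at_top[OF tendsto_const
          filterlim_tendsto_pos_mult_at_top[OF tendsto_const a filterlim_ident]])
    then have "((\<lambda>x. (c + a * x) powr (1 - p)) \<longlongrightarrow> 0) at_top"
      by (rule tendsto_neg_powr[rotated]) (use p in auto)
    then show "(F \<longlongrightarrow> 0) at_top"
      unfolding F_def by (rule tendsto_mult_right_zero)
  qed auto
  also have "0 - F 0 = c powr (1 - p) / (a * (p - 1))"
    unfolding F_def by simp
  finally show ?thesis .
qed

lemma nn_integral_powr_abs_affine_le:
  fixes c a p s0 :: real
  assumes c: "c > 0" and a: "a > 0" and p: "p > 1"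
  shows "(\<integral>\<^sup>+s. ennreal ((c + a * \<bar>s - s0\<bar>) powr (-p)) \<partial>lborel)
     \<le> ennreal (2 * (c powr (1 - p) / (a * (p - 1))))"
proof -
  define g where "g s = ennreal ((c + a * \<bar>s\<bar>) powr (-p))" for s :: real
  have [measurable]: "g \<in> borel_measurable borel"
    unfolding g_def by measurable
  define I where "I = (\<integral>\<^sup>+s. g s * indicator {0..} s \<partial>lborel)"
  have I: "I = ennreal (c powr (1 - p) / (a * (p - 1)))"
    unfolding I_def g_def
    by (intro trans[OF _ nn_integral_powr_affine_atLeast_0[OF c a p]] nn_integral_cong)
      (auto split: split_indicator)
  have "(\<integral>\<^sup>+s. g (s - s0) \<partial>lborel) = (\<integral>\<^sup>+s. g s \<partial>lborel)"
    using nn_integral_real_affine[of "\<lambda>s. g (s - s0)" 1 s0] by simp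
  also have "\<dots> = I + (\<integral>\<^sup>+s. g s * indicator {..<0} s \<partial>lborel)"
    unfolding I_def
    by (subst nn_integral_add[symmetric]) (auto intro!: nn_integral_cong split: split_indicator)
  also have "(\<integral>\<^sup>+s. g s * indicator {..<0} s \<partial>lborel)
      = (\<integral>\<^sup>+s. g (- s) * indicator {..<0} (- s) \<partial>lborel)"
    using nn_integral_real_affine[of "\<lambda>s. g s * indicator {..<0} s" "-1" 0] by simp
  also have "\<dots> \<le> I"
    unfolding I_def g_def by (intro nn_integral_mono) (auto split: split_indicator)
  finally have "(\<integral>\<^sup>+s. g (s - s0) \<partial>lborel) \<le> I + I"
    by (simp add: add_left_mono)
  also have "I + I = ennreal (2 * (c powr (1 - p) / (a * (p - 1))))"
    using a p by (simp add: I ennreal_plus[symmetric] del: ennreal_plus)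
  finally show ?thesis
    unfolding g_def .
qed

text \<open>Since \<open>(1 + u)\<^sup>2 \<le> 2 (1 + u\<^sup>2)\<close>, this reduces to the previous lemma with \<open>s0 = 0\<close>.\<close>
lemma nn_integral_one_plus_sq_div_powr_le:
  fixes e q :: real
  assumes e: "e > 0" and q: "q > 1/2"
  shows "(\<integral>\<^sup>+t. ennreal ((1 + t^2 / e) powr (-q)) \<partial>lborel)
     \<le> ennreal (2 * (2 powr q * sqrt e / (2 * q - 1)))"
proof -
  have se: "sqrt e > 0"
    using e by simp
  have pointwise: "(1 + t^2 / e) powr (-q) \<le> 2 powr q * (1 + (1 / sqrt e) * \<bar>t\<bar>) powr (- (2 * q))"
    for t
  proof -
    define u where "u = \<bar>t\<bar> / sqrt e"
    have u: "t^2 / e = u^2" "0 \<le> u"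
      unfolding u_def using e by (simp_all add: power_divide)
    have "(1 + u)^2 / 2 \<le> 1 + u^2"
      using sum_power2_ge_zero[of "1 - u" 0] by (simp add: power2_eq_square algebra_simps)
    then have "(1 + u^2) powr (-q) \<le> ((1 + u)^2 / 2) powr (-q)"
      by (intro powr_mono2') (use q u in auto)
    also have "((1 + u)^2 / 2) powr (-q) = ((1 + u) powr 2) powr (-q) / 2 powr (-q)"
      using u by (simp add: powr_divide powr_realpow)
    also have "\<dots> = 2 powr q * (1 + u) powr (- (2 * q))"
      by (simp add: powr_powr powr_minus divide_simps)
    finally show ?thesis
      using u unfolding u_def by simp
  qed
  have "(\<integral>\<^sup>+t. ennreal ((1 + t^2 / e) powr (-q)) \<partial>lborel)
      \<le> (\<integral>\<^sup>+t. ennreal (2 powr q) * ennreal ((1 + (1 / sqrt e) * \<bar>t\<bar>) powr (- (2 * q))) \<partial>lborel)"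
    by (intro nn_integral_mono) (use pointwise in \<open>simp add: ennreal_mult[symmetric]\<close>)
  also have "\<dots> = ennreal (2 powr q) * (\<integral>\<^sup>+t. ennreal ((1 + (1 / sqrt e) * \<bar>t\<bar>) powr (- (2 * q))) \<partial>lborel)"
    by (rule nn_integral_cmult) measurable
  also have "\<dots> \<le> ennreal (2 powr q) * ennreal (2 * (1 powr (1 - 2 * q) / ((1 / sqrt e) * (2 * q - 1))))"
    using nn_integral_powr_abs_affine_le[of 1 "1 / sqrt e" "2 * q" 0] se q
    by (intro mult_left_mono) auto
  also have "\<dots> = ennreal (2 * (2 powr q * sqrt e / (2 * q - 1)))"
    using q se by (simp add: ennreal_mult[symmetric] field_simps)
  finally show ?thesis .
qed

lemma nn_integral_one_plus_norm_pow_2_powr_finite: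
  fixes p :: real
  assumes p: "p > real DIM('a) / 2"
  shows "(\<integral>\<^sup>+x. ennreal ((1 + norm (x::'a::euclidean_space) ^ 2) powr (-p)) \<partial>lborel) < \<infinity>"
proof -
  define q where "q = p / real DIM('a)"
  have q: "q > 1/2"
    unfolding q_def using p by (simp add: field_simps)
  have "(\<integral>\<^sup>+x. ennreal ((1 + norm (x::'a) ^ 2) powr (-p)) \<partial>lborel)
      \<le> (\<integral>\<^sup>+x. (\<Prod>j\<in>Basis. ennreal ((1 + ((x::'a) \<bullet> j)^2) powr (-q))) \<partial>lborel)"
  proof (intro nn_integral_mono)
    fix x :: 'a
    have "(1 + norm x ^ 2) powr (-p) \<le> (\<Prod>j\<in>Basis. (1 + (x \<bullet> j)^2) powr (-q))"
      unfolding norm_pow_2_eq_sum_Basis q_def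
      by (rule powr_one_plus_sum_le_prod) (use p in \<open>auto intro: order.trans[rotated]\<close>)
    then show "ennreal ((1 + norm x ^ 2) powr (-p)) \<le> (\<Prod>j\<in>Basis. ennreal ((1 + (x \<bullet> j)^2) powr (-q)))"
      by (subst prod_ennreal) (auto intro!: ennreal_leI)
  qed
  also have "\<dots> = (\<Prod>j\<in>(Basis::'a set). \<integral>\<^sup>+t. ennreal ((1 + t^2) powr (-q)) \<partial>lborel)"
    by (rule nn_integral_lborel_prod) auto
  also have "\<dots> \<le> (\<Prod>j\<in>(Basis::'a set). ennreal (2 * (2 powr q / (2 * q - 1))))"
    using nn_integral_one_plus_sq_div_powr_le[of 1 q] q by (intro prod_mono_ennreal) simp
  also have "\<dots> < \<infinity>"
    by (simp add: power_less_top_ennreal)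
  finally show ?thesis .
qed

text \<open>Fubini along the lines parallel to \<open>b\<close>, each line being entered once through the slab
  \<open>0 \<le> x \<bullet> b \<le> 1\<close> (whose width along \<open>b\<close> is \<open>1\<close>).\<close>
lemma nn_integral_slab_sections:
  fixes f :: "'a::euclidean_space \<Rightarrow> ennreal" and b :: 'a
  assumes b: "b \<in> Basis" and f[measurable]: "f \<in> borel_measurable borel"
  shows "(\<integral>\<^sup>+z. f z \<partial>lborel)
       = (\<integral>\<^sup>+x. indicator {0..1} (x \<bullet> b) * (\<integral>\<^sup>+s. f (x + s *\<^sub>R b) \<partial>lborel) \<partial>lborel)"
proof -
  have "(\<integral>\<^sup>+x. indicator {0..1} (x \<bullet> b) * (\<integral>\<^sup>+s. f (x + s *\<^sub>R b) \<partial>lborel) \<partial>lborel)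
      = (\<integral>\<^sup>+x. (\<integral>\<^sup>+s. indicator {0..1} (x \<bullet> b) * f (x + s *\<^sub>R b) \<partial>lborel) \<partial>lborel)"
    by (intro nn_integral_cong nn_integral_cmult[symmetric]) measurable
  also have "\<dots> = (\<integral>\<^sup>+s. (\<integral>\<^sup>+x. indicator {0..1} (x \<bullet> b) * f (x + s *\<^sub>R b) \<partial>lborel) \<partial>lborel)"
    by (rule lborel_pair.Fubini') measurable
  also have "\<dots> = (\<integral>\<^sup>+s. (\<integral>\<^sup>+z. indicator {0..1} (z \<bullet> b - s) * f z \<partial>lborel) \<partial>lborel)"
  proof (rule nn_integral_cong)
    fix s :: real
    let ?G = "\<lambda>z. indicator {0..1} (z \<bullet> b - s) * f z"
    have "(\<integral>\<^sup>+z. ?G z \<partial>lborel) = (\<integral>\<^sup>+z. ?G z \<partial>distr lborel borel ((+) (s *\<^sub>R b)))"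
      by (simp add: lborel_distr_plus)
    also have "\<dots> = (\<integral>\<^sup>+x. ?G (s *\<^sub>R b + x) \<partial>lborel)"
      by (rule nn_integral_distr) measurable
    finally show "(\<integral>\<^sup>+x. indicator {0..1} (x \<bullet> b) * f (x + s *\<^sub>R b) \<partial>lborel) = (\<integral>\<^sup>+z. ?G z \<partial>lborel)"
      using b by (simp add: inner_add_left add.commute)
  qed
  also have "\<dots> = (\<integral>\<^sup>+z. (\<integral>\<^sup>+s. indicator {0..1} (z \<bullet> b - s) * f z \<partial>lborel) \<partial>lborel)"
    by (rule lborel_pair.Fubini'[symmetric]) measurable
  also have "\<dots> = (\<integral>\<^sup>+z. f z * (\<integral>\<^sup>+s. indicator {z \<bullet> b - 1 .. z \<bullet> b} s \<partial>lborel) \<partial>lborel)"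
  proof (rule nn_integral_cong)
    fix z :: 'a
    have "(\<integral>\<^sup>+s. indicator {0..1} (z \<bullet> b - s) * f z \<partial>lborel)
        = (\<integral>\<^sup>+s. f z * indicator {z \<bullet> b - 1 .. z \<bullet> b} s \<partial>lborel)"
      by (intro nn_integral_cong) (auto split: split_indicator)
    then show "(\<integral>\<^sup>+s. indicator {0..1} (z \<bullet> b - s) * f z \<partial>lborel)
        = f z * (\<integral>\<^sup>+s. indicator {z \<bullet> b - 1 .. z \<bullet> b} s \<partial>lborel)"
      by (simp add: nn_integral_cmult)
  qed
  also have "\<dots> = (\<integral>\<^sup>+z. f z \<partial>lborel)"
    by simp
  finally show ?thesis by (rule sym)
qed

section \<open>Upper bound for the \<open>L\<^sup>1\<close> norm\<close>

lemma nn_integral_line_delta_denom_le: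
  fixes x y b :: "'a::euclidean_space" and e p :: real
  assumes b: "b \<in> Basis" and yb: "y \<bullet> b \<noteq> 0" and e: "e > 0" and p: "p > 1"
  shows "(\<integral>\<^sup>+s. ennreal (delta_denom e y (x + s *\<^sub>R b) powr (-p)) \<partial>lborel)
    \<le> ennreal ((e + (\<Sum>j\<in>Basis - {b}. (x \<bullet> j)^2)) powr (1 - p) / (\<bar>y \<bullet> b\<bar> * (p - 1)))"
proof -
  define E where "E = e + (\<Sum>j\<in>Basis - {b}. (x \<bullet> j)^2)"
  have E: "E > 0"
    unfolding E_def using e by (simp add: add_pos_nonneg sum_nonneg)
  define s0 where "s0 = - (x \<bullet> y) / (y \<bullet> b)"
  have le_denom: "E + 2 * \<bar>y \<bullet> b\<bar> * \<bar>s - s0\<bar> \<le> delta_denom e y (x + s *\<^sub>R b)" for s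
  proof -
    have "(\<Sum>j\<in>Basis - {b}. ((x + s *\<^sub>R b) \<bullet> j)^2) = (\<Sum>j\<in>Basis - {b}. (x \<bullet> j)^2)"
      using b by (intro sum.cong) (auto simp: inner_add_left inner_not_same_Basis)
    then have "(\<Sum>j\<in>Basis - {b}. (x \<bullet> j)^2) \<le> norm (x + s *\<^sub>R b) ^ 2"
      using norm_pow_2_split_Basis[OF b, of "x + s *\<^sub>R b"] by simp
    moreover have "(x + s *\<^sub>R b) \<bullet> y = (y \<bullet> b) * (s - s0)"
      unfolding s0_def using yb by (simp add: inner_add_left inner_commute[of b y] field_simps)
    ultimately show ?thesis
      unfolding E_def delta_denom_def by (simp add: abs_mult)
  qed
  have "(\<integral>\<^sup>+s. ennreal (delta_denom e y (x + s *\<^sub>R b) powr (-p)) \<partial>lborel)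
     \<le> (\<integral>\<^sup>+s. ennreal ((E + 2 * \<bar>y \<bullet> b\<bar> * \<bar>s - s0\<bar>) powr (-p)) \<partial>lborel)"
    using E p le_denom by (intro nn_integral_mono ennreal_leI powr_mono2') (auto simp: add_pos_nonneg)
  also have "\<dots> \<le> ennreal (2 * (E powr (1 - p) / (2 * \<bar>y \<bullet> b\<bar> * (p - 1))))"
    by (rule nn_integral_powr_abs_affine_le) (use E yb p in auto)
  finally show ?thesis
    unfolding E_def by simp
qed

lemma nn_integral_line_delta_denom_le_prod:
  fixes x y b :: "'a::euclidean_space" and e p :: real
  assumes b: "b \<in> Basis" and yb: "y \<bullet> b \<noteq> 0" and e: "e > 0" and p: "p > 1"
  defines "q \<equiv> (p - 1) / (real DIM('a) - 1)"
  shows "(\<integral>\<^sup>+s. ennreal (delta_denom e y (x + s *\<^sub>R b) powr (-p)) \<partial>lborel)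
    \<le> ennreal (e powr (1 - p) / (\<bar>y \<bullet> b\<bar> * (p - 1)))
       * (\<Prod>j\<in>Basis - {b}. ennreal ((1 + (x \<bullet> j)^2 / e) powr (-q)))"
proof -
  define C where "C = e powr (1 - p) / (\<bar>y \<bullet> b\<bar> * (p - 1))"
  have C: "C \<ge> 0"
    unfolding C_def using p by simp
  have card: "real (card (Basis - {b} :: 'a set)) = real DIM('a) - 1"
    using b DIM_positive[where 'a='a] by simp
  have "(e + (\<Sum>j\<in>Basis - {b}. (x \<bullet> j)^2)) powr (1 - p)
      \<le> e powr (1 - p) * (\<Prod>j\<in>Basis - {b}. (1 + (x \<bullet> j)^2 / e) powr (-q))"
    using powr_add_sum_le_prod[of "Basis - {b}" e "p - 1" "\<lambda>j. x \<bullet> j"] e p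
    unfolding q_def card by simp
  then have "(e + (\<Sum>j\<in>Basis - {b}. (x \<bullet> j)^2)) powr (1 - p) / (\<bar>y \<bullet> b\<bar> * (p - 1))
      \<le> C * (\<Prod>j\<in>Basis - {b}. (1 + (x \<bullet> j)^2 / e) powr (-q))"
    unfolding C_def using yb p by (simp add: divide_right_mono)
  with nn_integral_line_delta_denom_le[OF b yb e p, of x] C show ?thesis
    unfolding C_def[symmetric]
    by (auto simp: prod_ennreal ennreal_mult[symmetric] prod_nonneg intro: order.trans ennreal_leI)
qed

lemma nn_integral_delta_denom_le:
  fixes y b :: "'a::euclidean_space" and e p :: real
  assumes b: "b \<in> Basis" and yb: "y \<bullet> b \<noteq> 0" and e: "e > 0"
    and p: "p > (real DIM('a) + 1) / 2"
  defines "q \<equiv> (p - 1) / (real DIM('a) - 1)"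
  shows "(\<integral>\<^sup>+x. ennreal (delta_denom e y x powr (-p)) \<partial>lborel)
    \<le> ennreal (e powr (1 - p) / (\<bar>y \<bullet> b\<bar> * (p - 1)))
       * ennreal (2 * (2 powr q * sqrt e / (2 * q - 1))) ^ (DIM('a) - 1)"
proof -
  define C where "C = e powr (1 - p) / (\<bar>y \<bullet> b\<bar> * (p - 1))"
  have p1: "p > 1"
    using p DIM_ge_1[where 'a='a] by argo
  define g where "g j t = (if j = b then indicator {0..1} t else ennreal ((1 + t^2 / e) powr (-q)))"
    for j t
  have [measurable]: "g j \<in> borel_measurable borel" for j
    unfolding g_def by measurable
  have line_integral_le: "indicator {0..1} (x \<bullet> b) * (\<integral>\<^sup>+s. ennreal (delta_denom e y (x + s *\<^sub>R b) powr (-p)) \<partial>lborel)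
      \<le> ennreal C * (\<Prod>j\<in>Basis. g j (x \<bullet> j))" for x
  proof -
    have "(\<Prod>j\<in>Basis. g j (x \<bullet> j))
        = (\<Prod>j\<in>Basis. if j = b then indicator {0..1} (x \<bullet> b) else ennreal ((1 + (x \<bullet> j)^2 / e) powr (-q)))"
      unfolding g_def by (rule prod.cong) auto
    with mult_left_mono[OF nn_integral_line_delta_denom_le_prod[OF b yb e p1, of x], of "indicator {0..1} (x \<bullet> b)"]
    show ?thesis
      unfolding C_def q_def by (simp add: prod_if_eq_remove[OF finite_Basis b] mult.left_commute)
  qed
  have integral_g: "(\<integral>\<^sup>+t. g j t \<partial>lborel) \<le> (if j = b then 1 else ennreal (2 * (2 powr q * sqrt e / (2 * q - 1))))"
    if j: "j \<in> Basis" for j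
  proof (cases "j = b")
    case False
    then have "2 = card {j, b}"
      by simp
    also have "\<dots> \<le> DIM('a)"
      using j b by (intro card_mono) auto
    finally have "real DIM('a) \<ge> 2"
      by simp
    then have "q > 1/2"
      unfolding q_def using p by (simp add: field_simps)
    then show ?thesis
      unfolding g_def using False nn_integral_one_plus_sq_div_powr_le[OF e] by simp
  qed (simp add: g_def)
  have "(\<integral>\<^sup>+x. ennreal (delta_denom e y x powr (-p)) \<partial>lborel)
      = (\<integral>\<^sup>+x. indicator {0..1} (x \<bullet> b) * (\<integral>\<^sup>+s. ennreal (delta_denom e y (x + s *\<^sub>R b) powr (-p)) \<partial>lborel) \<partial>lborel)"
    by (rule nn_integral_slab_sections[OF b]) measurable
  also have "\<dots> \<le> (\<integral>\<^sup>+x. ennreal C * (\<Prod>j\<in>Basis. g j (x \<bullet> j)) \<partial>lborel)"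
    by (intro nn_integral_mono line_integral_le)
  also have "\<dots> = ennreal C * (\<Prod>j\<in>Basis. \<integral>\<^sup>+t. g j t \<partial>lborel)"
    by (simp add: nn_integral_cmult nn_integral_lborel_prod)
  also have "\<dots> \<le> ennreal C * (\<Prod>j\<in>Basis. if j = b then 1 else ennreal (2 * (2 powr q * sqrt e / (2 * q - 1))))"
    by (intro mult_left_mono prod_mono_ennreal integral_g) auto
  also have "\<dots> = ennreal C * ennreal (2 * (2 powr q * sqrt e / (2 * q - 1))) ^ (DIM('a) - 1)"
    using prod_if_eq_remove[OF finite_Basis b, of 1 "\<lambda>_. ennreal (2 * (2 powr q * sqrt e / (2 * q - 1)))"] b
    by simp
  finally show ?thesis
    unfolding C_def .
qed

lemma nn_integral_delta_denom_powr_le_boundary: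
  fixes p :: real
  assumes p: "p > (real DIM('a) + 1) / 2"
  shows "\<exists>C\<ge>0. \<forall>y::'a::euclidean_space. 1/2 \<le> norm y \<and> norm y < 1 \<longrightarrow>
     (\<integral>\<^sup>+x. ennreal (delta_denom (1 - norm y ^ 2) y x powr (-p)) \<partial>lborel)
       \<le> ennreal (C * (1 - norm y ^ 2) powr ((real DIM('a) + 1) / 2 - p))"
proof -
  define n where "n = real DIM('a)"
  have n: "n \<ge> 1"
    unfolding n_def by (rule DIM_ge_1)
  define q where "q = (p - 1) / (n - 1)"
  define Q where "Q = 2 * (2 powr q / (2 * q - 1))"
  have p1: "p > 1"
    using p n unfolding n_def by argo
  have Q0: "Q \<ge> 0" if "DIM('a) \<noteq> 1"
  proof -
    have "DIM('a) \<ge> 2"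
      using that DIM_positive[where 'a='a] by linarith
    then have "q > 1/2"
      using p unfolding q_def n_def by (simp add: field_simps)
    then show ?thesis
      unfolding Q_def by simp
  qed
  have Q: "Q ^ (DIM('a) - 1) \<ge> 0"
    using Q0 by (cases "DIM('a) = 1") auto
  define C where "C = 2 * n * Q ^ (DIM('a) - 1) / (p - 1)"
  show ?thesis
  proof (intro exI[of _ C] conjI allI impI)
    show "C \<ge> 0"
      unfolding C_def using n Q p1 by simp
    fix y :: 'a
    assume y: "1/2 \<le> norm y \<and> norm y < 1"
    define e where "e = 1 - norm y ^ 2"
    have e: "e > 0"
      unfolding e_def using y by (intro one_minus_norm_pow_2_pos) auto
    obtain b where b: "b \<in> Basis" and yb0: "1 \<le> 4 * n * (y \<bullet> b)^2"
      and yb: "1 / \<bar>y \<bullet> b\<bar> \<le> 2 * n"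
      using exists_Basis_inner_large[of y] y unfolding n_def by auto
    from yb0 have yb0: "y \<bullet> b \<noteq> 0"
      by auto
    have "(\<integral>\<^sup>+x. ennreal (delta_denom e y x powr (-p)) \<partial>lborel)
        \<le> ennreal (e powr (1 - p) / (\<bar>y \<bullet> b\<bar> * (p - 1))) * ennreal (Q * sqrt e) ^ (DIM('a) - 1)"
      using nn_integral_delta_denom_le[OF b yb0 e p] unfolding Q_def q_def n_def
      by (simp add: mult.assoc)
    also have "\<dots> = ennreal (1 / \<bar>y \<bullet> b\<bar> * (Q ^ (DIM('a) - 1) / (p - 1) * e powr ((n + 1) / 2 - p)))"
    proof -
      have "sqrt e ^ (DIM('a) - 1) = e powr ((n - 1) / 2)"
        using e n unfolding n_def
        by (simp add: powr_half_sqrt[symmetric] powr_realpow[symmetric] powr_powr)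
      then have "ennreal (Q * sqrt e) ^ (DIM('a) - 1) = ennreal (Q ^ (DIM('a) - 1) * e powr ((n - 1) / 2))"
        using Q0 e by (cases "DIM('a) = 1") (auto simp: ennreal_power power_mult_distrib)
      moreover have "e powr (1 - p) / (\<bar>y \<bullet> b\<bar> * (p - 1)) * (Q ^ (DIM('a) - 1) * e powr ((n - 1) / 2))
          = 1 / \<bar>y \<bullet> b\<bar> * (Q ^ (DIM('a) - 1) / (p - 1) * e powr ((n + 1) / 2 - p))"
        by (simp add: powr_add[symmetric] field_simps)
      ultimately show ?thesis
        using Q p1 by (simp add: ennreal_mult[symmetric])
    qed
    also have "\<dots> \<le> ennreal (2 * n * (Q ^ (DIM('a) - 1) / (p - 1) * e powr ((n + 1) / 2 - p)))"
      using Q p1 by (intro ennreal_leI mult_right_mono yb) auto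
    finally show "(\<integral>\<^sup>+x. ennreal (delta_denom (1 - norm y ^ 2) y x powr (-p)) \<partial>lborel)
       \<le> ennreal (C * (1 - norm y ^ 2) powr ((real DIM('a) + 1) / 2 - p))"
      unfolding C_def e_def n_def by (simp add: mult_ac)
  qed
qed

lemma delta_denom_powr_le_interior:
  fixes x y :: "'a::real_inner" and p :: real
  assumes y: "norm y \<le> 1/2" and p: "p \<ge> 0"
  shows "delta_denom (1 - norm y ^ 2) y x powr (-p) \<le> (4/3) powr p * (1 + norm x ^ 2) powr (-p)"
proof -
  have "norm y ^ 2 \<le> (1/2)^2"
    using y by (intro power_mono) auto
  then have "3/4 * (1 + norm x ^ 2) \<le> delta_denom (1 - norm y ^ 2) y x"
    unfolding delta_denom_def by (simp add: power2_eq_square)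
  then have "delta_denom (1 - norm y ^ 2) y x powr (-p) \<le> (3/4 * (1 + norm x ^ 2)) powr (-p)"
    using p by (intro powr_mono2') (auto simp: add_pos_nonneg)
  also have "\<dots> = (3/4) powr (-p) * (1 + norm x ^ 2) powr (-p)"
    by (rule powr_mult)
  also have "(3/4::real) powr (-p) = (4/3) powr p"
    by (simp add: powr_minus powr_divide)
  finally show ?thesis .
qed

lemma nn_integral_delta_denom_powr_le:
  fixes p :: real
  assumes p: "p > (real DIM('a) + 1) / 2"
  shows "\<exists>C\<ge>0. \<forall>y::'a::euclidean_space. norm y < 1 \<longrightarrow>
     (\<integral>\<^sup>+x. ennreal (delta_denom (1 - norm y ^ 2) y x powr (-p)) \<partial>lborel)
       \<le> ennreal (C * (1 - norm y ^ 2) powr ((real DIM('a) + 1) / 2 - p))"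
proof -
  obtain C1 where C1: "C1 \<ge> 0" and boundary: "\<And>y::'a. 1/2 \<le> norm y \<and> norm y < 1 \<Longrightarrow>
      (\<integral>\<^sup>+x. ennreal (delta_denom (1 - norm y ^ 2) y x powr (-p)) \<partial>lborel)
        \<le> ennreal (C1 * (1 - norm y ^ 2) powr ((real DIM('a) + 1) / 2 - p))"
    using nn_integral_delta_denom_powr_le_boundary[OF p] by blast
  define J where "J = (\<integral>\<^sup>+x. ennreal ((1 + norm (x::'a) ^ 2) powr (-p)) \<partial>lborel)"
  have "J < \<infinity>"
    unfolding J_def using p by (intro nn_integral_one_plus_norm_pow_2_powr_finite) argo
  then have J: "J = ennreal (enn2real J)"
    by (simp add: less_top)
  define C2 where "C2 = (4/3) powr p * enn2real J"
  have C2: "C2 \<ge> 0"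
    unfolding C2_def by simp
  have p0: "p > 0"
    using p DIM_ge_1[where 'a='a] by argo
  show ?thesis
  proof (intro exI[of _ "C1 + C2"] conjI allI impI)
    show "0 \<le> C1 + C2"
      using C1 C2 by simp
    fix y :: 'a
    assume y: "norm y < 1"
    define e where "e = 1 - norm y ^ 2"
    have e: "0 < e" "e \<le> 1"
      unfolding e_def using y by (simp_all add: abs_square_less_1)
    have e_pow: "1 \<le> e powr ((real DIM('a) + 1) / 2 - p)"
      using one_le_powr_neg[OF e, of "p - (real DIM('a) + 1) / 2"] p by simp
    have "(\<integral>\<^sup>+x. ennreal (delta_denom e y x powr (-p)) \<partial>lborel) \<le> ennreal ((C1 + C2) * e powr ((real DIM('a) + 1) / 2 - p))"
    proof (cases "1/2 \<le> norm y")
      case True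
      then have "(\<integral>\<^sup>+x. ennreal (delta_denom e y x powr (-p)) \<partial>lborel) \<le> ennreal (C1 * e powr ((real DIM('a) + 1) / 2 - p))"
        using boundary y unfolding e_def by blast
      also have "\<dots> \<le> ennreal ((C1 + C2) * e powr ((real DIM('a) + 1) / 2 - p))"
        using C2 by (intro ennreal_leI mult_right_mono) auto
      finally show ?thesis .
    next
      case False
      have "(\<integral>\<^sup>+x. ennreal (delta_denom e y x powr (-p)) \<partial>lborel)
          \<le> (\<integral>\<^sup>+x. ennreal ((4/3) powr p) * ennreal ((1 + norm (x::'a) ^ 2) powr (-p)) \<partial>lborel)"
        unfolding e_def using False p0
        by (intro nn_integral_mono) (simp add: ennreal_mult[symmetric] delta_denom_powr_le_interior)
      also have "\<dots> = ennreal C2"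
        unfolding C2_def J_def using J by (simp add: nn_integral_cmult ennreal_mult J_def)
      also have "\<dots> \<le> ennreal ((C1 + C2) * e powr ((real DIM('a) + 1) / 2 - p))"
        using C1 C2 mult_left_mono[OF e_pow, of "C1 + C2"] by (intro ennreal_leI) simp
      finally show ?thesis .
    qed
    then show "(\<integral>\<^sup>+x. ennreal (delta_denom (1 - norm y ^ 2) y x powr (-p)) \<partial>lborel)
       \<le> ennreal ((C1 + C2) * (1 - norm y ^ 2) powr ((real DIM('a) + 1) / 2 - p))"
      unfolding e_def .
  qed
qed

lemma nn_integral_delta_denom_powr_le_split:
  fixes y :: "'a::euclidean_space" and e m p :: real
  assumes e: "0 < e" and m: "0 \<le> m" "m \<le> p"
  shows "(\<integral>\<^sup>+x. ennreal (delta_denom e y x powr (-m)) \<partial>lborel)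
    \<le> (\<integral>\<^sup>+x. ennreal (delta_denom e y x powr (-p)) \<partial>lborel)
       + ennreal (2 powr m) * (\<integral>\<^sup>+x. ennreal ((1 + norm (x::'a) ^ 2) powr (-m)) \<partial>lborel)"
proof -
  have "(\<integral>\<^sup>+x. ennreal (delta_denom e y x powr (-m)) \<partial>lborel)
      \<le> (\<integral>\<^sup>+x. ennreal (delta_denom e y x powr (-p)) + ennreal (2 powr m) * ennreal ((1 + norm x ^ 2) powr (-m)) \<partial>lborel)"
  proof (intro nn_integral_mono)
    fix x :: 'a
    have "delta_denom e y x powr (-m) \<le> delta_denom e y x powr (-p) + 2 powr m * (1 + norm x ^ 2) powr (-m)"
      using e m by (intro powr_neg_le_split delta_denom_pos) (auto simp: delta_denom_def)
    then show "ennreal (delta_denom e y x powr (-m))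
        \<le> ennreal (delta_denom e y x powr (-p)) + ennreal (2 powr m) * ennreal ((1 + norm x ^ 2) powr (-m))"
      by (simp add: ennreal_mult[symmetric] ennreal_plus[symmetric] del: ennreal_plus)
  qed
  also have "\<dots> = (\<integral>\<^sup>+x. ennreal (delta_denom e y x powr (-p)) \<partial>lborel)
       + ennreal (2 powr m) * (\<integral>\<^sup>+x. ennreal ((1 + norm (x::'a) ^ 2) powr (-m)) \<partial>lborel)"
    by (subst nn_integral_add) (auto simp: nn_integral_cmult)
  finally show ?thesis .
qed

text \<open>The exponent \<open>m = Re \<lambda> + n/2\<close> is raised to \<open>p = \<beta> + (n+1)/2\<close>, which the transverse integrals
  require, at the price of the integrable term \<open>2\<^sup>m (1 + \<bar>x\<bar>\<^sup>2)\<^sup>-\<^sup>m\<close> coming from \<open>h \<ge> 1\<close>.\<close>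
lemma L1norm_delta_le:
  fixes lam :: complex and \<beta> :: real
  assumes lam: "Re lam > 0" and \<beta>: "\<beta> > 0" "Re lam - 1/2 \<le> \<beta>"
  shows "\<exists>M\<ge>0. \<forall>y::'a::euclidean_space. norm y < 1 \<longrightarrow>
           L1norm (delta lam y) \<le> ennreal (M * (1 - norm y ^ 2) powr (-\<beta>))"
proof -
  define n where "n = real DIM('a)"
  define m where "m = Re lam + n / 2"
  define p where "p = \<beta> + (n + 1) / 2"
  have m: "0 < m" "m \<le> p" "n / 2 < m"
    unfolding m_def p_def n_def using lam \<beta> by (auto simp: add_pos_nonneg field_simps)
  obtain C where C: "C \<ge> 0" and denom: "\<And>y::'a. norm y < 1 \<Longrightarrow>
      (\<integral>\<^sup>+x. ennreal (delta_denom (1 - norm y ^ 2) y x powr (-p)) \<partial>lborel)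
        \<le> ennreal (C * (1 - norm y ^ 2) powr (-\<beta>))"
    using nn_integral_delta_denom_powr_le[of p, where 'a='a] \<beta> unfolding p_def n_def by auto
  define J where "J = (\<integral>\<^sup>+x. ennreal ((1 + norm (x::'a) ^ 2) powr (-m)) \<partial>lborel)"
  have "J < \<infinity>"
    unfolding J_def using m(3) unfolding n_def by (rule nn_integral_one_plus_norm_pow_2_powr_finite)
  then have J: "J = ennreal (enn2real J)"
    by (simp add: less_top)
  define K where "K = norm (inverse (cconst DIM('a) lam)) * exp (pi * \<bar>Im lam\<bar>) * 2 powr m"
  have K: "K \<ge> 0"
    unfolding K_def by simp
  define M where "M = K * (C + 2 powr m * enn2real J)"
  show ?thesis
  proof (intro exI[of _ M] conjI allI impI)
    show "M \<ge> 0"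
      unfolding M_def using K C by simp
    fix y :: 'a
    assume y: "norm y < 1"
    define e where "e = 1 - norm y ^ 2"
    have e: "0 < e" "e \<le> 1"
      unfolding e_def using y by (simp_all add: abs_square_less_1)
    have e_pow: "1 \<le> e powr (-\<beta>)"
      using one_le_powr_neg[OF e] \<beta> by simp
    have "L1norm (delta lam y) \<le> ennreal K * (\<integral>\<^sup>+x. ennreal (delta_denom e y x powr (-m)) \<partial>lborel)"
      using L1norm_delta_le_nn_integral[OF y lam] unfolding K_def m_def n_def e_def .
    also have "\<dots> \<le> ennreal K * ((\<integral>\<^sup>+x. ennreal (delta_denom e y x powr (-p)) \<partial>lborel) + ennreal (2 powr m) * J)"
      unfolding J_def using e m by (intro mult_left_mono nn_integral_delta_denom_powr_le_split) auto
    also have "\<dots> \<le> ennreal K * (ennreal (C * e powr (-\<beta>)) + ennreal (2 powr m) * ennreal (enn2real J * e powr (-\<beta>)))"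
    proof (intro add_mono mult_left_mono order.refl)
      show "(\<integral>\<^sup>+x. ennreal (delta_denom e y x powr (-p)) \<partial>lborel) \<le> ennreal (C * e powr (-\<beta>))"
        unfolding e_def by (rule denom[OF y])
      show "J \<le> ennreal (enn2real J * e powr (-\<beta>))"
        using mult_left_mono[OF e_pow, of "enn2real J"] by (subst J) (intro ennreal_leI, simp)
    qed auto
    also have "\<dots> = ennreal (M * e powr (-\<beta>))"
      unfolding M_def using K C
      by (simp add: ennreal_mult[symmetric] ennreal_plus[symmetric] algebra_simps del: ennreal_plus)
    finally show "L1norm (delta lam y) \<le> ennreal (M * (1 - norm y ^ 2) powr (-\<beta>))"
      unfolding e_def .
  qed
qed

section \<open>Lower bound for the \<open>L\<^sup>1\<close> norm near the sphere\<close>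

lemma sum_transverse_pow_2_le:
  fixes x b :: "'a::euclidean_space" and e :: real
  assumes b: "b \<in> Basis" and e: "0 \<le> e"
    and x: "\<And>j. j \<in> Basis - {b} \<Longrightarrow> \<bar>x \<bullet> j\<bar> \<le> sqrt e / real DIM('a)"
  shows "(\<Sum>j\<in>Basis - {b}. (x \<bullet> j)^2) \<le> e"
proof -
  define n where "n = real DIM('a)"
  have n: "n \<ge> 1"
    unfolding n_def by (rule DIM_ge_1)
  have "(\<Sum>j\<in>Basis - {b}. (x \<bullet> j)^2) \<le> (\<Sum>j\<in>Basis - {b}. (sqrt e / n)^2)"
    using x unfolding n_def by (intro sum_mono) (metis abs_ge_zero power2_abs power_mono)
  also have "\<dots> \<le> n * (sqrt e / n)^2"
    unfolding n_def using b by (simp add: mult_right_mono)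
  also have "\<dots> \<le> e"
    using e n by (simp add: field_simps power2_eq_square mult_le_cancel_left1)
  finally show ?thesis .
qed

lemma abs_sum_transverse_inner_le:
  fixes x y b :: "'a::euclidean_space" and e :: real
  assumes b: "b \<in> Basis" and e: "0 \<le> e" and y: "norm y \<le> 1"
    and x: "\<And>j. j \<in> Basis - {b} \<Longrightarrow> \<bar>x \<bullet> j\<bar> \<le> sqrt e / real DIM('a)"
  shows "\<bar>\<Sum>j\<in>Basis - {b}. (x \<bullet> j) * (y \<bullet> j)\<bar> \<le> sqrt e"
proof -
  have "\<bar>\<Sum>j\<in>Basis - {b}. (x \<bullet> j) * (y \<bullet> j)\<bar> \<le> (\<Sum>j\<in>Basis - {b}. sqrt e / real DIM('a))"
  proof (rule order.trans[OF sum_abs sum_mono])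
    fix j
    assume j: "j \<in> Basis - {b}"
    have "\<bar>y \<bullet> j\<bar> \<le> 1"
      using Basis_le_norm[of j y] j y by (simp add: inner_commute)
    then show "\<bar>(x \<bullet> j) * (y \<bullet> j)\<bar> \<le> sqrt e / real DIM('a)"
      using x[OF j] unfolding abs_mult by (metis abs_ge_zero mult_left_le order_trans)
  qed
  also have "\<dots> \<le> sqrt e"
    using b e DIM_ge_1[where 'a='a] by (simp add: field_simps mult_right_mono)
  finally show ?thesis .
qed

text \<open>On the sheared box \<open>\<bar>x \<bullet> j\<bar> \<le> \<surd>e / n\<close> (\<open>j \<noteq> b\<close>), \<open>\<bar>s - s\<^sub>0\<bar> \<le> e\<close>, where \<open>s\<^sub>0\<close> makes
  \<open>x + s\<^sub>0 b\<close> orthogonal to \<open>y\<close>, all terms of \<open>delta_denom\<close> are \<open>O(e)\<close>.\<close>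
lemma delta_denom_le_sheared_box:
  fixes x y b :: "'a::euclidean_space" and e s :: real
  assumes b: "b \<in> Basis" and yb: "1 \<le> 4 * real DIM('a) * (y \<bullet> b)^2" and y: "norm y \<le> 1"
    and e: "0 < e" "e \<le> 1"
    and x: "\<And>j. j \<in> Basis - {b} \<Longrightarrow> \<bar>x \<bullet> j\<bar> \<le> sqrt e / real DIM('a)"
    and s: "\<bar>s + (x \<bullet> y) / (y \<bullet> b)\<bar> \<le> e"
  shows "delta_denom e y (x + s *\<^sub>R b) \<le> (8 * real DIM('a) + 6) * e"
proof -
  define n where "n = real DIM('a)"
  define a where "a = y \<bullet> b"
  define d where "d = s + (x \<bullet> y) / a"
  define S where "S = (\<Sum>j\<in>Basis - {b}. (x \<bullet> j) * (y \<bullet> j))"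
  have a0: "a \<noteq> 0"
    using yb unfolding a_def by auto
  have a: "1 / a^2 \<le> 4 * n" "\<bar>a\<bar> \<le> 1"
    using a0 yb Basis_le_norm[OF b, of y] y unfolding a_def n_def
    by (auto simp: divide_le_eq inner_commute mult_ac)
  have d: "\<bar>d\<bar> \<le> e"
    using s unfolding d_def a_def .
  have "d^2 \<le> e^2"
    using d by (metis abs_ge_zero power2_abs power_mono)
  also have "\<dots> \<le> e"
    using e by (simp add: power2_eq_square mult_left_le_one_le)
  finally have d2: "d^2 \<le> e" .
  have "\<bar>S\<bar> \<le> sqrt e"
    unfolding S_def using abs_sum_transverse_inner_le[OF b less_imp_le[OF e(1)] y x] .
  then have "S^2 \<le> e"
    using e by (metis abs_ge_zero power2_abs power_mono real_sqrt_pow2 less_imp_le)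
  have "(\<Sum>j\<in>Basis - {b}. ((x + s *\<^sub>R b) \<bullet> j)^2) = (\<Sum>j\<in>Basis - {b}. (x \<bullet> j)^2)"
    using b by (intro sum.cong) (auto simp: inner_add_left inner_not_same_Basis)
  with sum_transverse_pow_2_le[OF b less_imp_le[OF e(1)] x]
  have transverse: "(\<Sum>j\<in>Basis - {b}. ((x + s *\<^sub>R b) \<bullet> j)^2) \<le> e"
    by simp
  have "(x + s *\<^sub>R b) \<bullet> b = - S / a + d"
    using b a0 unfolding S_def d_def a_def
    by (simp add: inner_add_left euclidean_inner[of x y] sum.remove field_simps)
  moreover have "(u + v)^2 \<le> 2 * u^2 + 2 * v^2" for u v :: real
    using zero_le_power2[of "u - v"] by (simp add: power2_eq_square algebra_simps)
  ultimately have "((x + s *\<^sub>R b) \<bullet> b)^2 \<le> 2 * (S^2 * (1 / a^2)) + 2 * d^2"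
    by (metis power_divide power2_minus times_divide_eq_right mult_1_right)
  also have "\<dots> \<le> 2 * (e * (4 * n)) + 2 * e"
    using \<open>S^2 \<le> e\<close> a(1) d2 e by (intro add_mono mult_left_mono mult_mono) auto
  finally have along_b: "((x + s *\<^sub>R b) \<bullet> b)^2 \<le> (8 * n + 2) * e"
    by (simp add: algebra_simps)
  have "(x + s *\<^sub>R b) \<bullet> y = a * d"
    unfolding d_def a_def using a0 unfolding a_def
    by (simp add: inner_add_left inner_commute[of b y] field_simps)
  then have "2 * \<bar>(x + s *\<^sub>R b) \<bullet> y\<bar> \<le> 2 * e"
    using mult_mono[OF a(2) d] by (simp add: abs_mult)
  with along_b transverse norm_pow_2_split_Basis[OF b, of "x + s *\<^sub>R b"]
  show ?thesis
    unfolding delta_denom_def n_def by (simp add: algebra_simps)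
qed

lemma nn_integral_line_delta_denom_ge:
  fixes x y b :: "'a::euclidean_space" and e p :: real
  assumes b: "b \<in> Basis" and yb: "1 \<le> 4 * real DIM('a) * (y \<bullet> b)^2" and y: "norm y \<le> 1"
    and e: "0 < e" "e \<le> 1" and p: "p > 0"
    and x: "\<forall>j\<in>Basis - {b}. \<bar>x \<bullet> j\<bar> \<le> sqrt e / real DIM('a)"
  shows "ennreal (2 * e * ((8 * real DIM('a) + 6) * e) powr (-p))
    \<le> (\<integral>\<^sup>+s. ennreal (delta_denom e y (x + s *\<^sub>R b) powr (-p)) \<partial>lborel)"
proof -
  define D where "D = 8 * real DIM('a) + 6"
  define s0 where "s0 = - (x \<bullet> y) / (y \<bullet> b)"
  have "ennreal (2 * e * (D * e) powr (-p))
      = (\<integral>\<^sup>+s. ennreal ((D * e) powr (-p)) * indicator {s0 - e .. s0 + e} s \<partial>lborel)"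
    using e by (simp add: nn_integral_cmult_indicator ennreal_mult[symmetric] mult_ac)
  also have "\<dots> \<le> (\<integral>\<^sup>+s. ennreal (delta_denom e y (x + s *\<^sub>R b) powr (-p)) \<partial>lborel)"
  proof (intro nn_integral_mono)
    fix s :: real
    show "ennreal ((D * e) powr (-p)) * indicator {s0 - e .. s0 + e} s
        \<le> ennreal (delta_denom e y (x + s *\<^sub>R b) powr (-p))"
    proof (cases "s \<in> {s0 - e .. s0 + e}")
      case True
      then have "\<bar>s + (x \<bullet> y) / (y \<bullet> b)\<bar> \<le> e"
        unfolding s0_def by (auto simp: abs_le_iff)
      then have "delta_denom e y (x + s *\<^sub>R b) \<le> D * e"
        unfolding D_def using x by (intro delta_denom_le_sheared_box[OF b yb y e]) auto
      then have "(D * e) powr (-p) \<le> delta_denom e y (x + s *\<^sub>R b) powr (-p)"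
        using p e by (intro powr_mono2') (auto intro: delta_denom_pos)
      then show ?thesis
        using True by simp
    qed simp
  qed
  finally show ?thesis
    unfolding D_def .
qed

lemma nn_integral_delta_denom_ge:
  fixes y b :: "'a::euclidean_space" and e p :: real
  assumes b: "b \<in> Basis" and yb: "1 \<le> 4 * real DIM('a) * (y \<bullet> b)^2" and y: "norm y \<le> 1"
    and e: "0 < e" "e \<le> 1" and p: "p > 0"
  shows "ennreal (2 * e * ((8 * real DIM('a) + 6) * e) powr (-p)) * ennreal (2 * (sqrt e / real DIM('a))) ^ (DIM('a) - 1)
    \<le> (\<integral>\<^sup>+x. ennreal (delta_denom e y x powr (-p)) \<partial>lborel)"
proof -
  define w where "w = sqrt e / real DIM('a)"
  have w: "w \<ge> 0"
    unfolding w_def using e by simp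
  define K where "K = 2 * e * ((8 * real DIM('a) + 6) * e) powr (-p)"
  define g where "g j t = (if j = b then indicator {0..1} t else indicator {-w..w} t :: ennreal)"
    for j :: 'a and t :: real
  have [measurable]: "g j \<in> borel_measurable borel" for j
    unfolding g_def by measurable
  have "(\<Prod>j\<in>Basis. \<integral>\<^sup>+t. g j t \<partial>lborel) = (\<Prod>j\<in>Basis. if j = b then 1 else ennreal (2 * w))"
    using w unfolding g_def by (intro prod.cong) auto
  also have "\<dots> = ennreal (2 * w) ^ (DIM('a) - 1)"
    using prod_if_eq_remove[OF finite_Basis b, of 1 "\<lambda>_. ennreal (2 * w)"] b by simp
  finally have "ennreal K * ennreal (2 * w) ^ (DIM('a) - 1) = (\<integral>\<^sup>+x. ennreal K * (\<Prod>j\<in>Basis. g j (x \<bullet> j)) \<partial>lborel)"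
    by (simp add: nn_integral_cmult nn_integral_lborel_prod)
  also have "\<dots> \<le> (\<integral>\<^sup>+x. indicator {0..1} (x \<bullet> b)
      * (\<integral>\<^sup>+s. ennreal (delta_denom e y (x + s *\<^sub>R b) powr (-p)) \<partial>lborel) \<partial>lborel)"
  proof (intro nn_integral_mono)
    fix x :: 'a
    show "ennreal K * (\<Prod>j\<in>Basis. g j (x \<bullet> j))
        \<le> indicator {0..1} (x \<bullet> b) * (\<integral>\<^sup>+s. ennreal (delta_denom e y (x + s *\<^sub>R b) powr (-p)) \<partial>lborel)"
    proof (cases "\<forall>j\<in>Basis - {b}. \<bar>x \<bullet> j\<bar> \<le> w")
      case True
      then have "(\<Prod>j\<in>Basis. g j (x \<bullet> j)) = (\<Prod>j\<in>Basis. if j = b then indicator {0..1} (x \<bullet> b) else 1)"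
        unfolding g_def by (intro prod.cong) (force simp: abs_le_iff)+
      also have "\<dots> = indicator {0..1} (x \<bullet> b)"
        using prod_if_eq_remove[OF finite_Basis b, of "indicator {0..1} (x \<bullet> b)" "\<lambda>_. 1"] by simp
      finally show ?thesis
        using nn_integral_line_delta_denom_ge[OF b yb y e p, of x] True
        unfolding K_def w_def by (simp add: mult.commute mult_left_mono)
    next
      case False
      then obtain j where "j \<in> Basis - {b}" "\<bar>x \<bullet> j\<bar> > w"
        by (meson not_le)
      then have "(\<Prod>j\<in>Basis. g j (x \<bullet> j)) = 0"
        unfolding g_def by (intro prod_zero bexI[of _ j]) (auto simp: indicator_def abs_le_iff)
      then show ?thesis
        by (simp only: mult_zero_right zero_le)
    qed
  qed
  also have "\<dots> = (\<integral>\<^sup>+x. ennreal (delta_denom e y x powr (-p)) \<partial>lborel)"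
    by (rule nn_integral_slab_sections[OF b, symmetric]) measurable
  finally show ?thesis
    unfolding K_def w_def .
qed

lemma nn_integral_delta_denom_powr_ge_boundary:
  fixes p :: real
  assumes p: "p > 0"
  shows "\<exists>c>0. \<forall>y::'a::euclidean_space. 1/2 \<le> norm y \<and> norm y < 1 \<longrightarrow>
     ennreal (c * (1 - norm y ^ 2) powr ((real DIM('a) + 1) / 2 - p))
       \<le> (\<integral>\<^sup>+x. ennreal (delta_denom (1 - norm y ^ 2) y x powr (-p)) \<partial>lborel)"
proof -
  define n where "n = real DIM('a)"
  have n: "n \<ge> 1"
    unfolding n_def by (rule DIM_ge_1)
  define D where "D = 8 * n + 6"
  define c where "c = 2 * D powr (-p) * (2 / n) ^ (DIM('a) - 1)"
  show ?thesis
  proof (intro exI[of _ c] conjI allI impI)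
    show "c > 0"
      unfolding c_def D_def using n by simp
    fix y :: 'a
    assume y: "1/2 \<le> norm y \<and> norm y < 1"
    define e where "e = 1 - norm y ^ 2"
    have e: "0 < e" "e \<le> 1"
      unfolding e_def using y by (simp_all add: abs_square_less_1)
    obtain b where b: "b \<in> Basis" and yb: "1 \<le> 4 * n * (y \<bullet> b)^2"
      using exists_Basis_inner_large[of y] y unfolding n_def by auto
    have "sqrt e ^ (DIM('a) - 1) = e powr ((n - 1) / 2)"
      using e n unfolding n_def by (simp add: powr_half_sqrt[symmetric] powr_realpow[symmetric] powr_powr)
    then have "ennreal (2 * (sqrt e / n)) ^ (DIM('a) - 1) = ennreal ((2 / n) ^ (DIM('a) - 1) * e powr ((n - 1) / 2))"
      using e n by (simp add: ennreal_power power_mult_distrib power_divide)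
    moreover have "2 * e * (D * e) powr (-p) * ((2 / n) ^ (DIM('a) - 1) * e powr ((n - 1) / 2))
        = c * e powr ((n + 1) / 2 - p)"
    proof -
      have "e * (D * e) powr (-p) = D powr (-p) * e powr (1 - p)"
        using e unfolding D_def using n by (simp add: powr_mult powr_diff powr_minus divide_simps)
      moreover have "e powr (1 - p) * e powr ((n - 1) / 2) = e powr ((n + 1) / 2 - p)"
        by (simp add: powr_add[symmetric] field_simps)
      ultimately have "e * (D * e) powr (-p) * e powr ((n - 1) / 2) = D powr (-p) * e powr ((n + 1) / 2 - p)"
        by (simp only: mult.assoc)
      then show ?thesis
        unfolding c_def by (simp add: mult_ac)
    qed
    ultimately have "ennreal (c * e powr ((n + 1) / 2 - p))
        = ennreal (2 * e * (D * e) powr (-p)) * ennreal (2 * (sqrt e / n)) ^ (DIM('a) - 1)"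
      using e n by (simp add: ennreal_mult[symmetric])
    also have "\<dots> \<le> (\<integral>\<^sup>+x. ennreal (delta_denom e y x powr (-p)) \<partial>lborel)"
      using nn_integral_delta_denom_ge[OF b _ _ e p] yb y unfolding D_def n_def by auto
    finally show "ennreal (c * (1 - norm y ^ 2) powr ((real DIM('a) + 1) / 2 - p))
       \<le> (\<integral>\<^sup>+x. ennreal (delta_denom (1 - norm y ^ 2) y x powr (-p)) \<partial>lborel)"
      unfolding e_def n_def .
  qed
qed

lemma L1norm_delta_ge:
  fixes lam :: complex
  assumes lam: "Re lam > 0"
  shows "\<exists>c>0. \<forall>y::'a::euclidean_space. 1/2 \<le> norm y \<and> norm y < 1 \<longrightarrow>
           ennreal (c * (1 - norm y ^ 2) powr (1/2 - Re lam)) \<le> L1norm (delta lam y)"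
proof -
  define m where "m = Re lam + real DIM('a) / 2"
  have "(real DIM('a) + 1) / 2 - m = 1/2 - Re lam"
    unfolding m_def by (simp add: field_simps)
  moreover obtain c where c: "c > 0" and denom: "\<And>y::'a. 1/2 \<le> norm y \<and> norm y < 1 \<Longrightarrow>
      ennreal (c * (1 - norm y ^ 2) powr ((real DIM('a) + 1) / 2 - m))
        \<le> (\<integral>\<^sup>+x. ennreal (delta_denom (1 - norm y ^ 2) y x powr (-m)) \<partial>lborel)"
    using nn_integral_delta_denom_powr_ge_boundary[of m, where 'a='a] lam unfolding m_def
    by (auto simp: add_pos_nonneg)
  ultimately have denom: "\<And>y::'a. 1/2 \<le> norm y \<and> norm y < 1 \<Longrightarrow>
      ennreal (c * (1 - norm y ^ 2) powr (1/2 - Re lam))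
        \<le> (\<integral>\<^sup>+x. ennreal (delta_denom (1 - norm y ^ 2) y x powr (-m)) \<partial>lborel)"
    by simp
  define K where "K = norm (inverse (cconst DIM('a) lam)) * exp (- pi * \<bar>Im lam\<bar>)"
  have K: "K > 0"
    unfolding K_def using cconst_nonzero[OF lam] by simp
  show ?thesis
  proof (intro exI[of _ "K * c"] conjI allI impI)
    show "K * c > 0"
      using K c by simp
    fix y :: 'a
    assume y: "1/2 \<le> norm y \<and> norm y < 1"
    have "ennreal (K * c * (1 - norm y ^ 2) powr (1/2 - Re lam))
        = ennreal K * ennreal (c * (1 - norm y ^ 2) powr (1/2 - Re lam))"
      using K c by (simp add: ennreal_mult[symmetric] mult.assoc)
    also have "\<dots> \<le> ennreal K * (\<integral>\<^sup>+x. ennreal (delta_denom (1 - norm y ^ 2) y x powr (-m)) \<partial>lborel)"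
      by (intro mult_left_mono denom y) simp
    also have "\<dots> \<le> L1norm (delta lam y)"
      using nn_integral_le_L1norm_delta[of y lam] y lam unfolding K_def m_def by simp
    finally show "ennreal (K * c * (1 - norm y ^ 2) powr (1/2 - Re lam)) \<le> L1norm (delta lam y)" .
  qed
qed

section \<open>Powers of \<open>1 - \<bar>y\<bar>\<^sup>2\<close> on dyadic shells\<close>

definition shell_radius :: "nat \<Rightarrow> real" where
  "shell_radius k = 1 - (1/2)^k"

definition shell :: "nat \<Rightarrow> 'a::euclidean_space set" where
  "shell k = ball 0 (shell_radius (Suc k)) - ball 0 (shell_radius k)"

lemma shell_radius_mono: "k \<le> l \<Longrightarrow> shell_radius k \<le> shell_radius l"
  unfolding shell_radius_def by (simp add: power_decreasing)

lemma shell_radius_bounds: "0 \<le> shell_radius k" "shell_radius k < 1"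
  unfolding shell_radius_def by (auto simp: power_le_one)

lemma shell_radius_Suc_diff: "shell_radius (Suc k) - shell_radius k = (1/2)^Suc k"
  unfolding shell_radius_def by simp

lemma mem_shell_iff: "y \<in> shell k \<longleftrightarrow> shell_radius k \<le> norm y \<and> norm y < shell_radius (Suc k)"
  unfolding shell_def by auto

lemma shell_sets [measurable]: "shell k \<in> sets borel"
  unfolding shell_def by simp

lemma disjoint_family_shell: "disjoint_family (shell :: nat \<Rightarrow> 'a::euclidean_space set)"
  unfolding disjoint_family_on_def
proof (intro ballI impI)
  fix k l :: nat
  assume "k \<noteq> l"
  then have "Suc k \<le> l \<or> Suc l \<le> k"
    by linarith
  then have "shell_radius (Suc k) \<le> shell_radius l \<or> shell_radius (Suc l) \<le> shell_radius k"
    using shell_radius_mono by blast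
  then show "shell k \<inter> shell l = ({} :: 'a set)"
    by (auto simp: disjoint_iff mem_shell_iff)
qed

lemma Union_shell: "(\<Union>k. shell k) = ball (0::'a::euclidean_space) 1"
proof
  show "(\<Union>k. shell k) \<subseteq> ball (0::'a) 1"
    by (auto simp: mem_shell_iff) (meson less_trans shell_radius_bounds(2))
  show "ball (0::'a) 1 \<subseteq> (\<Union>k. shell k)"
  proof
    fix y :: 'a
    assume "y \<in> ball 0 1"
    then obtain N where "(1/2::real)^N < 1 - norm y"
      using real_arch_pow_inv[of "1 - norm y" "1/2"] by auto
    then have ex: "\<exists>k. norm y < shell_radius k"
      unfolding shell_radius_def by (auto intro!: exI[of _ N])
    define k where "k = (LEAST k. norm y < shell_radius k)"
    have k: "norm y < shell_radius k"
      unfolding k_def by (rule LeastI_ex[OF ex])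
    then obtain j where j: "k = Suc j"
      using norm_ge_zero[of y] by (cases k) (auto simp: shell_radius_def)
    have "\<not> norm y < shell_radius j"
      using not_less_Least[of j "\<lambda>k. norm y < shell_radius k"] j unfolding k_def by auto
    with k j have "y \<in> shell j"
      by (simp add: mem_shell_iff)
    then show "y \<in> (\<Union>k. shell k)"
      by blast
  qed
qed

lemma emeasure_shell:
  "emeasure lborel (shell k :: 'a::euclidean_space set)
     = ennreal (unit_ball_vol (DIM('a)) * (shell_radius (Suc k) ^ DIM('a) - shell_radius k ^ DIM('a)))"
proof -
  have "emeasure lborel (shell k :: 'a set)
      = emeasure lborel (ball (0::'a) (shell_radius (Suc k))) - emeasure lborel (ball (0::'a) (shell_radius k))"
    unfolding shell_def using shell_radius_mono[of k "Suc k"]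
    by (intro emeasure_Diff) (auto simp: emeasure_ball shell_radius_bounds)
  also have "\<dots> = ennreal (unit_ball_vol (DIM('a)) * shell_radius (Suc k) ^ DIM('a)
      - unit_ball_vol (DIM('a)) * shell_radius k ^ DIM('a))"
    unfolding emeasure_ball[OF shell_radius_bounds(1)]
    by (rule ennreal_minus) (use shell_radius_bounds in auto)
  finally show ?thesis
    by (simp add: algebra_simps)
qed

lemma emeasure_shell_le:
  "emeasure lborel (shell k :: 'a::euclidean_space set) \<le> ennreal (unit_ball_vol (DIM('a)) * real DIM('a) * (1/2)^Suc k)"
proof -
  have "shell_radius (Suc k) ^ DIM('a) - shell_radius k ^ DIM('a) \<le> real DIM('a) * (1/2)^Suc k"
    using power_diff_le_mult_diff[of "shell_radius k" "shell_radius (Suc k)" "DIM('a)"]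
      shell_radius_bounds shell_radius_mono[of k "Suc k"]
    by (simp add: shell_radius_Suc_diff less_imp_le)
  then show ?thesis
    unfolding emeasure_shell by (intro ennreal_leI) (simp add: mult.assoc mult_left_mono)
qed

lemma emeasure_shell_ge:
  assumes "k \<ge> 1"
  shows "ennreal (unit_ball_vol (DIM('a)) * (1/2)^Suc k * (1/2)^(DIM('a) - 1))
    \<le> emeasure lborel (shell k :: 'a::euclidean_space set)"
proof -
  have "1/2 \<le> shell_radius k"
    using shell_radius_mono[OF assms] by (simp add: shell_radius_def)
  then have "(1/2)^(DIM('a) - 1) \<le> shell_radius k ^ (DIM('a) - 1)"
    by (intro power_mono) auto
  then have "(1/2)^Suc k * (1/2)^(DIM('a) - 1) \<le> (shell_radius (Suc k) - shell_radius k) * shell_radius k ^ (DIM('a) - 1)"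
    unfolding shell_radius_Suc_diff by (intro mult_left_mono) auto
  also have "\<dots> \<le> shell_radius (Suc k) ^ DIM('a) - shell_radius k ^ DIM('a)"
    using shell_radius_bounds(1) shell_radius_mono[of k "Suc k"] DIM_positive[where 'a='a]
    by (intro power_diff_ge_mult_diff) auto
  finally show ?thesis
    unfolding emeasure_shell by (intro ennreal_leI) (simp add: mult.assoc mult_left_mono)
qed

lemma one_minus_norm_pow_2_shell_bounds:
  assumes "y \<in> shell k"
  shows "(1/2)^Suc k \<le> 1 - norm y ^ 2" "1 - norm y ^ 2 \<le> 2 * (1/2)^k"
proof -
  have y: "1 - (1/2)^k \<le> norm y" "norm y < 1 - (1/2)^Suc k"
    using assms by (auto simp: mem_shell_iff shell_radius_def)
  have "(0::real) < (1/2)^Suc k"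
    by simp
  then have y1: "norm y < 1"
    using y by linarith
  have factor: "1 - norm y ^ 2 = (1 - norm y) * (1 + norm y)"
    by (simp add: power2_eq_square algebra_simps)
  have "(1/2)^Suc k \<le> (1 - norm y) * 1"
    using y by simp
  also have "\<dots> \<le> (1 - norm y) * (1 + norm y)"
    using y1 by (intro mult_left_mono) auto
  finally show "(1/2)^Suc k \<le> 1 - norm y ^ 2"
    unfolding factor .
  have "(1 - norm y) * (1 + norm y) \<le> (1/2)^k * 2"
    using y y1 by (intro mult_mono) auto
  then show "1 - norm y ^ 2 \<le> 2 * (1/2)^k"
    unfolding factor by simp
qed

lemma Union_shell_add:
  "(\<Union>k. shell (k + m)) = ball (0::'a::euclidean_space) 1 - ball 0 (shell_radius m)"
proof (intro equalityI subsetI)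
  fix y :: 'a
  assume "y \<in> (\<Union>k. shell (k + m))"
  then obtain k where k: "y \<in> shell (k + m)"
    by blast
  then have "y \<in> (\<Union>k. shell k)"
    by blast
  then have "y \<in> ball 0 1"
    by (simp only: Union_shell)
  moreover have "shell_radius m \<le> norm y"
    using k shell_radius_mono[of m "k + m"] by (simp add: mem_shell_iff)
  ultimately show "y \<in> ball 0 1 - ball 0 (shell_radius m)"
    by simp
next
  fix y :: 'a
  assume y: "y \<in> ball 0 1 - ball 0 (shell_radius m)"
  then have "y \<in> (\<Union>k. shell k)"
    unfolding Union_shell by simp
  then obtain j where j: "y \<in> shell j"
    by blast
  have "m \<le> j"
  proof (rule ccontr)
    assume "\<not> m \<le> j"
    then have "shell_radius (Suc j) \<le> shell_radius m"
      by (intro shell_radius_mono) simp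
    with j y show False
      by (simp add: mem_shell_iff)
  qed
  with j have "y \<in> shell ((j - m) + m)"
    by simp
  then show "y \<in> (\<Union>k. shell (k + m))"
    by blast
qed

lemma disjoint_family_shell_add: "disjoint_family (\<lambda>k. shell (k + m) :: 'a::euclidean_space set)"
  unfolding disjoint_family_on_def
proof (intro ballI impI)
  fix k l :: nat
  assume "k \<noteq> l"
  then have "k + m \<noteq> l + m"
    by simp
  then show "shell (k + m) \<inter> shell (l + m) = ({} :: 'a set)"
    using disjoint_family_shell unfolding disjoint_family_on_def by blast
qed

lemma nn_integral_annulus_eq_suminf_shell:
  fixes f :: "'a::euclidean_space \<Rightarrow> ennreal"
  assumes [measurable]: "f \<in> borel_measurable borel"
  shows "(\<integral>\<^sup>+y \<in> ball 0 1 - ball 0 (shell_radius m). f y \<partial>lborel)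
       = (\<Sum>k. \<integral>\<^sup>+y \<in> shell (k + m). f y \<partial>lborel)"
proof -
  have "(\<integral>\<^sup>+y \<in> ball 0 1 - ball 0 (shell_radius m). f y \<partial>lborel)
      = (\<integral>\<^sup>+y. (\<Sum>k. f y * indicator (shell (k + m)) y) \<partial>lborel)"
    unfolding Union_shell_add[symmetric] ennreal_suminf_cmult
      suminf_indicator[OF disjoint_family_shell_add] ..
  also have "\<dots> = (\<Sum>k. \<integral>\<^sup>+y \<in> shell (k + m). f y \<partial>lborel)"
    by (rule nn_integral_suminf) simp
  finally show ?thesis .
qed

lemma nn_integral_shell_one_minus_norm_pow_2_powr_le:
  fixes \<gamma> :: real
  assumes \<gamma>: "\<gamma> \<le> 0"
  shows "(\<integral>\<^sup>+y \<in> (shell k :: 'a::euclidean_space set). ennreal ((1 - norm y ^ 2) powr \<gamma>) \<partial>lborel)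
    \<le> ennreal (unit_ball_vol (DIM('a)) * real DIM('a) * ((1/2) powr (\<gamma> + 1)) ^ Suc k)"
proof -
  define V where "V = unit_ball_vol (DIM('a))"
  have "((1/2::real)^Suc k) powr \<gamma> * (1/2)^Suc k = ((1/2::real)^Suc k) powr (\<gamma> + 1)"
    by (simp add: powr_add)
  also have "\<dots> = ((1/2::real) powr real (Suc k)) powr (\<gamma> + 1)"
    by (subst powr_realpow) simp_all
  also have "\<dots> = ((1/2) powr (\<gamma> + 1)) ^ Suc k"
    by (simp only: powr_powr powr_power[of "1/2::real"] mult.commute)
  finally have pow: "((1/2::real)^Suc k) powr \<gamma> * (1/2)^Suc k = ((1/2) powr (\<gamma> + 1)) ^ Suc k" .
  have "(\<integral>\<^sup>+y \<in> (shell k :: 'a set). ennreal ((1 - norm y ^ 2) powr \<gamma>) \<partial>lborel)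
      \<le> (\<integral>\<^sup>+y. ennreal (((1/2)^Suc k) powr \<gamma>) * indicator (shell k :: 'a set) y \<partial>lborel)"
    using \<gamma> one_minus_norm_pow_2_shell_bounds(1)
    by (intro nn_integral_mono) (auto intro!: ennreal_leI powr_mono2' simp: indicator_def)
  also have "\<dots> = ennreal (((1/2)^Suc k) powr \<gamma>) * emeasure lborel (shell k :: 'a set)"
    by (rule nn_integral_cmult_indicator) simp
  also have "\<dots> \<le> ennreal (((1/2)^Suc k) powr \<gamma>) * ennreal (V * real DIM('a) * (1/2)^Suc k)"
    unfolding V_def by (rule mult_left_mono[OF emeasure_shell_le]) simp
  also have "\<dots> = ennreal (V * real DIM('a) * ((1/2) powr (\<gamma> + 1)) ^ Suc k)"
    unfolding pow[symmetric] V_def by (simp add: ennreal_mult[symmetric] mult_ac)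
  finally show ?thesis
    unfolding V_def .
qed

lemma nn_integral_shell_one_minus_norm_pow_2_powr_ge:
  fixes \<gamma> :: real
  assumes \<gamma>: "\<gamma> \<le> -1" and k: "k \<ge> 1"
  shows "ennreal (unit_ball_vol (DIM('a)) / 4 * (1/2) ^ (DIM('a) - 1))
    \<le> (\<integral>\<^sup>+y \<in> (shell k :: 'a::euclidean_space set). ennreal ((1 - norm y ^ 2) powr \<gamma>) \<partial>lborel)"
proof -
  define V where "V = unit_ball_vol (DIM('a))"
  define a where "a = 1 / (2 * (1/2::real)^k)"
  have "ennreal (V / 4 * (1/2) ^ (DIM('a) - 1)) = ennreal (a * (V * (1/2)^Suc k * (1/2)^(DIM('a) - 1)))"
    unfolding a_def by simp
  also have "\<dots> = ennreal a * ennreal (V * (1/2)^Suc k * (1/2)^(DIM('a) - 1))"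
    unfolding a_def V_def by (rule ennreal_mult) auto
  also have "\<dots> \<le> ennreal a * emeasure lborel (shell k :: 'a set)"
    unfolding V_def using k by (intro mult_left_mono emeasure_shell_ge) auto
  also have "\<dots> = (\<integral>\<^sup>+y. ennreal a * indicator (shell k :: 'a set) y \<partial>lborel)"
    by (rule nn_integral_cmult_indicator[symmetric]) simp
  also have "\<dots> \<le> (\<integral>\<^sup>+y \<in> (shell k :: 'a set). ennreal ((1 - norm y ^ 2) powr \<gamma>) \<partial>lborel)"
  proof (intro nn_integral_mono)
    fix y :: 'a
    show "ennreal a * indicator (shell k) y \<le> ennreal ((1 - norm y ^ 2) powr \<gamma>) * indicator (shell k) y"
    proof (cases "y \<in> shell k")
      case True
      note bounds = one_minus_norm_pow_2_shell_bounds[OF True]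
      have "0 < (1/2::real)^Suc k"
        by simp
      then have pos: "0 < 1 - norm y ^ 2"
        using bounds(1) by linarith
      have "(1/2::real)^k \<le> (1/2)^1"
        using k by (intro power_decreasing) auto
      then have le1: "1 - norm y ^ 2 \<le> 1"
        using bounds(2) by simp
      have "a \<le> 1 / (1 - norm y ^ 2)"
        unfolding a_def using bounds(2) pos by (intro divide_left_mono) auto
      also have "\<dots> = (1 - norm y ^ 2) powr (-1)"
        using pos by (simp add: powr_minus_divide)
      also have "\<dots> \<le> (1 - norm y ^ 2) powr \<gamma>"
        using pos le1 \<gamma> by (intro powr_mono') auto
      finally show ?thesis
        using True by (simp add: ennreal_leI)
    qed simp
  qed
  finally show ?thesis
    unfolding V_def .
qed

lemma nn_integral_ball_one_minus_norm_pow_2_powr_finite: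
  fixes \<gamma> :: real
  assumes \<gamma>: "\<gamma> > -1"
  shows "(\<integral>\<^sup>+y \<in> ball (0::'a::euclidean_space) 1. ennreal ((1 - norm y ^ 2) powr \<gamma>) \<partial>lborel) < \<infinity>"
proof (cases "\<gamma> \<ge> 0")
  case True
  have "(\<integral>\<^sup>+y \<in> ball (0::'a) 1. ennreal ((1 - norm y ^ 2) powr \<gamma>) \<partial>lborel)
      \<le> (\<integral>\<^sup>+y. indicator (ball (0::'a) 1) y \<partial>lborel)"
  proof (intro nn_integral_mono)
    fix y :: 'a
    have "(1 - norm y ^ 2) powr \<gamma> \<le> 1" if "norm y < 1"
    proof -
      have "0 \<le> 1 - norm y ^ 2"
        using that by (simp add: abs_square_less_1 less_imp_le)
      then show ?thesis
        using True powr_mono2[of \<gamma> "1 - norm y ^ 2" 1] by simp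
    qed
    then show "ennreal ((1 - norm y ^ 2) powr \<gamma>) * indicator (ball 0 1) y \<le> indicator (ball 0 1) y"
      by (simp add: indicator_def)
  qed
  also have "\<dots> < \<infinity>"
    by (simp add: emeasure_ball)
  finally show ?thesis .
next
  case False
  define C where "C = unit_ball_vol (DIM('a)) * real DIM('a)"
  define \<rho> where "\<rho> = (1/2::real) powr (\<gamma> + 1)"
  have \<rho>: "0 < \<rho>" "\<rho> < 1"
    unfolding \<rho>_def using \<gamma> powr_less_mono'[of "1/2::real" 0 "\<gamma> + 1"] by auto
  have "(\<integral>\<^sup>+y \<in> ball (0::'a) 1. ennreal ((1 - norm y ^ 2) powr \<gamma>) \<partial>lborel)
      = (\<Sum>k. \<integral>\<^sup>+y \<in> (shell k :: 'a set). ennreal ((1 - norm y ^ 2) powr \<gamma>) \<partial>lborel)"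
    using nn_integral_annulus_eq_suminf_shell[of "\<lambda>y. ennreal ((1 - norm y ^ 2) powr \<gamma>)" 0]
    unfolding shell_radius_def by simp
  also have "\<dots> \<le> (\<Sum>k. ennreal (C * \<rho> ^ Suc k))"
    unfolding C_def \<rho>_def using False
    by (intro suminf_le nn_integral_shell_one_minus_norm_pow_2_powr_le) auto
  also have "\<dots> < \<infinity>"
  proof -
    have "summable (\<lambda>k. \<rho> ^ Suc k)"
      using \<rho> by (simp add: summable_Suc_iff summable_geometric)
    then have "summable (\<lambda>k. C * \<rho> ^ Suc k)"
      by (rule summable_mult)
    then show ?thesis
      using \<rho> unfolding C_def by (simp add: ennreal_suminf_neq_top less_top[symmetric])
  qed
  finally show ?thesis .
qed

lemma nn_integral_annulus_one_minus_norm_pow_2_powr_infinite: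
  fixes \<gamma> :: real
  assumes \<gamma>: "\<gamma> \<le> -1"
  shows "(\<integral>\<^sup>+y \<in> ball (0::'a::euclidean_space) 1 - ball 0 (1/2). ennreal ((1 - norm y ^ 2) powr \<gamma>) \<partial>lborel) = \<infinity>"
proof -
  define c where "c = unit_ball_vol (DIM('a)) / 4 * (1/2) ^ (DIM('a) - 1)"
  have "unit_ball_vol (DIM('a)) \<noteq> 0"
    by (metis of_nat_0_le_iff order_less_irrefl unit_ball_vol_pos)
  then have "(\<Sum>k. ennreal c) = \<infinity>"
    unfolding infinity_ennreal_def c_def
    by (intro summable_iff_suminf_neq_top) (simp_all add: summable_const_iff)
  then have "\<infinity> = (\<Sum>k. ennreal c)"
    by simp
  also have "\<dots> \<le> (\<Sum>k. \<integral>\<^sup>+y \<in> (shell (k + 1) :: 'a set). ennreal ((1 - norm y ^ 2) powr \<gamma>) \<partial>lborel)"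
    unfolding c_def using \<gamma> by (intro suminf_le nn_integral_shell_one_minus_norm_pow_2_powr_ge) auto
  also have "\<dots> = (\<integral>\<^sup>+y \<in> ball (0::'a) 1 - ball 0 (1/2). ennreal ((1 - norm y ^ 2) powr \<gamma>) \<partial>lborel)"
    using nn_integral_annulus_eq_suminf_shell[of "\<lambda>y. ennreal ((1 - norm y ^ 2) powr \<gamma>)" 1, symmetric]
    unfolding shell_radius_def by simp
  finally show ?thesis
    by (simp only: infinity_ennreal_def top_unique)
qed

lemma ball_in_borel [measurable]: "ball (x::'a::metric_space) r \<in> sets borel"
  by simp

lemma wgt_eq_wgt_0_mult: "wgt \<alpha> y = wgt \<alpha> (0::'a) * (1 - norm y ^ 2) powr (\<alpha> - 1)"
  for y :: "'a::euclidean_space"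
  unfolding wgt_def by simp

lemma wgt_0_pos: "\<alpha> > 0 \<Longrightarrow> wgt \<alpha> (0::'a::euclidean_space) > 0"
  unfolding wgt_def by (simp add: Gamma_real_pos)

lemma wgt_mult_pow_2:
  fixes y :: "'a::euclidean_space"
  assumes "\<alpha> > 0" "C \<ge> 0"
  shows "ennreal (wgt \<alpha> y) * ennreal (C * (1 - norm y ^ 2) powr a)^2
    = ennreal (wgt \<alpha> (0::'a) * C^2) * ennreal ((1 - norm y ^ 2) powr (\<alpha> - 1 + 2 * a))"
proof -
  have "(C * (1 - norm y ^ 2) powr a)^2 = C^2 * (1 - norm y ^ 2) powr (2 * a)"
    by (simp add: power2_eq_square powr_add[symmetric] algebra_simps)
  then have "wgt \<alpha> y * (C * (1 - norm y ^ 2) powr a)^2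
      = wgt \<alpha> (0::'a) * C^2 * (1 - norm y ^ 2) powr (\<alpha> - 1 + 2 * a)"
    unfolding wgt_eq_wgt_0_mult[of \<alpha> y] by (simp add: powr_add mult_ac)
  moreover have "0 \<le> wgt \<alpha> y"
    using wgt_0_pos[OF assms(1), where 'a='a] by (simp add: wgt_eq_wgt_0_mult[of \<alpha> y])
  ultimately show ?thesis
    using wgt_0_pos[OF assms(1), where 'a='a] assms(2)
    by (simp add: ennreal_power ennreal_mult[symmetric])
qed

lemma nn_integral_wgt_pow_2_finite:
  fixes L :: "'a::euclidean_space \<Rightarrow> ennreal"
  assumes \<alpha>: "\<alpha> > 0" and \<beta>: "2 * \<beta> < \<alpha>" and M: "M \<ge> 0"
    and L: "\<And>y. norm y < 1 \<Longrightarrow> L y \<le> ennreal (M * (1 - norm y ^ 2) powr (-\<beta>))"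
  shows "(\<integral>\<^sup>+y \<in> ball 0 1. ennreal (wgt \<alpha> y) * (L y)^2 \<partial>lborel) < \<infinity>"
proof -
  define C where "C = wgt \<alpha> (0::'a) * M^2"
  have "(\<integral>\<^sup>+y \<in> ball 0 1. ennreal (wgt \<alpha> y) * (L y)^2 \<partial>lborel)
      \<le> (\<integral>\<^sup>+y \<in> ball (0::'a) 1. ennreal C * ennreal ((1 - norm y ^ 2) powr (\<alpha> - 1 - 2 * \<beta>)) \<partial>lborel)"
  proof (intro nn_integral_mono)
    fix y :: 'a
    have "ennreal (wgt \<alpha> y) * (L y)^2 \<le> ennreal (wgt \<alpha> y) * ennreal (M * (1 - norm y ^ 2) powr (-\<beta>))^2"
      if "norm y < 1"
      using L[OF that] by (intro mult_left_mono power_mono) auto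
    also have "\<dots> = ennreal C * ennreal ((1 - norm y ^ 2) powr (\<alpha> - 1 - 2 * \<beta>))"
      unfolding C_def using wgt_mult_pow_2[OF \<alpha> M, of y "-\<beta>"] by simp
    finally show "ennreal (wgt \<alpha> y) * (L y)^2 * indicator (ball 0 1) y
        \<le> ennreal C * ennreal ((1 - norm y ^ 2) powr (\<alpha> - 1 - 2 * \<beta>)) * indicator (ball 0 1) y"
      by (simp add: indicator_def)
  qed
  also have "\<dots> = ennreal C * (\<integral>\<^sup>+y \<in> ball (0::'a) 1. ennreal ((1 - norm y ^ 2) powr (\<alpha> - 1 - 2 * \<beta>)) \<partial>lborel)"
    unfolding mult.assoc by (rule nn_integral_cmult) measurable
  also have "\<dots> < \<infinity>"
    using nn_integral_ball_one_minus_norm_pow_2_powr_finite[of "\<alpha> - 1 - 2 * \<beta>", where 'a='a] \<beta>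
    by (simp add: ennreal_mult_less_top)
  finally show ?thesis .
qed

lemma nn_integral_wgt_pow_2_infinite:
  fixes L :: "'a::euclidean_space \<Rightarrow> ennreal"
  assumes \<alpha>: "\<alpha> > 0" "\<alpha> \<le> 2 * s - 1" and c: "c > 0"
    and L: "\<And>y. 1/2 \<le> norm y \<and> norm y < 1 \<Longrightarrow> ennreal (c * (1 - norm y ^ 2) powr (1/2 - s)) \<le> L y"
  shows "(\<integral>\<^sup>+y \<in> ball 0 1. ennreal (wgt \<alpha> y) * (L y)^2 \<partial>lborel) = \<infinity>"
proof -
  define C where "C = wgt \<alpha> (0::'a) * c^2"
  have C: "C > 0"
    unfolding C_def using wgt_0_pos[OF \<alpha>(1), where 'a='a] c by simp
  have "\<infinity> = ennreal C * (\<integral>\<^sup>+y \<in> ball (0::'a) 1 - ball 0 (1/2). ennreal ((1 - norm y ^ 2) powr (\<alpha> - 2 * s)) \<partial>lborel)"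
    using nn_integral_annulus_one_minus_norm_pow_2_powr_infinite[of "\<alpha> - 2 * s", where 'a='a] \<alpha> C
    by (simp add: ennreal_mult_top)
  also have "\<dots> = (\<integral>\<^sup>+y \<in> ball (0::'a) 1 - ball 0 (1/2). ennreal C * ennreal ((1 - norm y ^ 2) powr (\<alpha> - 2 * s)) \<partial>lborel)"
    unfolding mult.assoc by (rule nn_integral_cmult[symmetric]) measurable
  also have "\<dots> \<le> (\<integral>\<^sup>+y \<in> ball 0 1. ennreal (wgt \<alpha> y) * (L y)^2 \<partial>lborel)"
  proof (intro nn_integral_mono)
    fix y :: 'a
    have "ennreal C * ennreal ((1 - norm y ^ 2) powr (\<alpha> - 2 * s))
        = ennreal (wgt \<alpha> y) * ennreal (c * (1 - norm y ^ 2) powr (1/2 - s))^2"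
      unfolding C_def using wgt_mult_pow_2[OF \<alpha>(1), of c y "1/2 - s"] c by simp
    also have "\<dots> \<le> ennreal (wgt \<alpha> y) * (L y)^2" if "1/2 \<le> norm y \<and> norm y < 1"
      using L[OF that] by (intro mult_left_mono power_mono) auto
    finally show "ennreal C * ennreal ((1 - norm y ^ 2) powr (\<alpha> - 2 * s)) * indicator (ball 0 1 - ball 0 (1/2)) y
        \<le> ennreal (wgt \<alpha> y) * (L y)^2 * indicator (ball 0 1) y"
      by (simp add: indicator_def)
  qed
  finally show ?thesis
    by (simp add: top_unique)
qed

theorem mainTheorem11:
  fixes lam :: complex and \<alpha> :: real
  assumes "Re lam > 0" and "\<alpha> > 0"
  shows "((\<integral>\<^sup>+ y \<in> ball (0::'a::euclidean_space) 1.
             ennreal (wgt \<alpha> y) * (L1norm (delta lam y))^2 \<partial>lborel) < \<infinity>)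
         \<longleftrightarrow> \<alpha> > max (2 * Re lam - 1) 0"
proof
  assume finite: "(\<integral>\<^sup>+ y \<in> ball (0::'a) 1. ennreal (wgt \<alpha> y) * (L1norm (delta lam y))^2 \<partial>lborel) < \<infinity>"
  obtain c where c: "c > 0" and L: "\<And>y::'a. 1/2 \<le> norm y \<and> norm y < 1 \<Longrightarrow>
      ennreal (c * (1 - norm y ^ 2) powr (1/2 - Re lam)) \<le> L1norm (delta lam y)"
    using L1norm_delta_ge[OF assms(1)] by blast
  have "\<not> \<alpha> \<le> 2 * Re lam - 1"
  proof
    assume "\<alpha> \<le> 2 * Re lam - 1"
    from nn_integral_wgt_pow_2_infinite[OF assms(2) this c L] finite show False
      by simp
  qed
  with assms(2) show "\<alpha> > max (2 * Re lam - 1) 0"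
    by simp
next
  assume \<alpha>: "\<alpha> > max (2 * Re lam - 1) 0"
  define \<beta> where "\<beta> = (max (Re lam - 1/2) 0 + \<alpha> / 2) / 2"
  have \<beta>: "\<beta> > 0" "Re lam - 1/2 \<le> \<beta>" "2 * \<beta> < \<alpha>"
    unfolding \<beta>_def using \<alpha> by (auto simp: max_def)
  obtain M where M: "M \<ge> 0"
    and L: "\<And>y::'a. norm y < 1 \<Longrightarrow> L1norm (delta lam y) \<le> ennreal (M * (1 - norm y ^ 2) powr (-\<beta>))"
    using L1norm_delta_le[OF assms(1) \<beta>(1,2)] by blast
  show "(\<integral>\<^sup>+ y \<in> ball (0::'a) 1. ennreal (wgt \<alpha> y) * (L1norm (delta lam y))^2 \<partial>lborel) < \<infinity>"
    by (rule nn_integral_wgt_pow_2_finite[OF assms(2) \<beta>(3) M L])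
qed

end
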